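(* Suppose $[X\ Z]$ is $s$-regular ($s=s_1+s_2$) and the parameter $\sigma$ of GPNA satisfies $\sigma\in(0,l_f/2)$. Let $\{\beta^k\}$ be generated by GPNA and $\beta^*$ its limit. Then for all sufficiently large $k$: if $\ell=\ell_{log}$, $\displaystyle \|\beta^{k+1}-\beta^*\|\le\frac{(1+L_f)^2C_f}{2l_f}\|\beta^k-\beta^*\|^2$; if $\ell=\ell_{lin}$, $\beta^{k+1}=\beta^*$ (finite termination).
   Context: Data: $X\in\mathbb{R}^{n\times p_1}$, $Z\in\mathbb{R}^{n\times p_2}$ with rows $x_i,z_i$; $y\in\mathbb{R}^n$ ($y\in\{0,1\}^n$ for $\ell_{log}$); $a,b,c>0$; integers $1\le s_j\le p_j$. Losses $\ell_{lin}(\beta;X,y)=\frac12\sum_i(y_i-\langle x_i,\beta\rangle)^2$, $\ell_{log}(\beta;X,y)=\sum_i(\log(1+\exp\langle x_i,\beta\rangle)-y_i\langle x_i,\beta\rangle)$. Objective $f(\beta)=\frac1n[a\ell(\beta_1;X,y)+b\ell(\beta_2;Z,y)+\frac c2\|X\beta_1-Z\beta_2\|^2]$, $\beta=(\beta_1;\beta_2)$. A matrix is $s$-regular if any $s$ of its columns are linearly independent. Constants: for $\ell_{log}$, $L_f=\lambda_{\max}\big(\frac1n\begin{bmatrix}(a/4+c)X^\top X&-cX^\top Z\\-cZ^\top X&(b/4+c)Z^\top Z\end{bmatrix}\big)$, $l_f=\min_{|T|\le s}\lambda_{\min}\big(\frac cn\begin{bmatrix}X^\top X&-X^\top Z\\-Z^\top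 X&Z^\top Z\end{bmatrix}_{TT}\big)$, $C_f=\frac{3\sqrt2}{n}\max\{a\max_i\|x_i\|_1\lambda_{\max}(X^\top X),\,b\max_i\|z_i\|_1\lambda_{\max}(Z^\top Z)\}$; for $\ell_{lin}$, with $Q=\frac1n\begin{bmatrix}(a+c)X^\top X&-cX^\top Z\\-cZ^\top X&(b+c)Z^\top Z\end{bmatrix}$, $L_f=\lambda_{\max}(Q)$, $l_f=\min_{|T|\le s}\lambda_{\min}(Q_{TT})$; minima over $T\subseteq[p_1+p_2]$. $\Sigma_j=\{v\in\mathbb{R}^{p_j}:\|v\|_0\le s_j\}$, $\Sigma=\{\beta:\beta_j\in\Sigma_j\}$; $\Pi_{\Sigma_j}(w)=\arg\min_{u\in\Sigma_j}\|w-u\|$ (set-valued); $\nabla_jf$ is the gradient in $\beta_j$; $\Gamma(v)$ is the support. GPNA (run without stopping): parameters $\sigma>0$, $\epsilon>0$, $\alpha_0\in(0,1]$, $\gamma\in(0,1)$, start $\beta^0\in\Sigma$. At iteration $k$, for $\alpha>0$ let $\beta^k(\alpha)=(\beta_1^k(\alpha);\beta_2^k(\alpha))$, $\beta_j^k(\alpha)\in\Pi_{\Sigma_j}(\beta_j^k-\alpha\nabla_jf(\beta^k))$. Let $q_k$ be the smallest nonnegative integer with $f(\beta^k(\alpha_0\gamma^{q_k}))\le f(\beta^k)-\frac\sigma2\|\beta^k(\alpha_0\gamma^{q_k})-\beta^k\|^2$; $\alpha_k=\alpha_0\gamma^{q_k}$, $u^k=\beta^k(\alpha_k)$, $\Gamma_k=\Gamma(u^k)$,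 $H^k=\nabla^2f(u^k)$, tentatively $\beta^{k+1}=u^k$. If one of (C1) $\Gamma(\beta_1^k)=\Gamma(u_1^k)$ and $\Gamma(\beta_2^k)=\Gamma(u_2^k)$; (C2) $\|\nabla_1f(u^k)\|<\epsilon$ and $\Gamma(\beta_2^k)=\Gamma(u_2^k)$; (C3) $\|\nabla_2f(u^k)\|<\epsilon$ and $\Gamma(\beta_1^k)=\Gamma(u_1^k)$; (C4) $\|\nabla_1f(u^k)\|<\epsilon$ and $\|\nabla_2f(u^k)\|<\epsilon$ holds, and the Newton system $(H^k)_{\Gamma_k\Gamma_k}(v_{\Gamma_k}-u^k_{\Gamma_k})=-(\nabla f(u^k))_{\Gamma_k}$, $v_{\overline{\Gamma}_k}=0$ has a solution $v^k$ with $f(v^k)\le f(u^k)-\frac\sigma2\|v^k-u^k\|^2$, then set $\beta^{k+1}=v^k$ instead. (Under the hypotheses, the sequence $\{\beta^k\}$ converges.) *)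

theory Defs
  imports "HOL-Analysis.Analysis"
begin

(* Coefficient vectors beta = (beta_1; beta_2) live in real^('p1 + 'p2):
   index Inl i is coordinate i of beta_1, index Inr j is coordinate j of beta_2.
   Data: X :: real^'p1^'n (rows x_i = X $ i), Z :: real^'p2^'n, y :: real^'n,
   so n = CARD('n), p1 = CARD('p1), p2 = CARD('p2). *)

datatype loss = Lin | Log

definition blk1 :: "real^('p1::finite + 'p2::finite) \<Rightarrow> real^'p1" where
  "blk1 b = (\<chi> i. b $ Inl i)"

definition blk2 :: "real^('p1::finite + 'p2::finite) \<Rightarrow> real^'p2" where
  "blk2 b = (\<chi> j. b $ Inr j)"

definition supp :: "real^'m \<Rightarrow> 'm set" where
  "supp v = {i. v $ i \<noteq> 0}"

definition loss_lin :: "real^'p \<Rightarrow> real^'p^'n::finite \<Rightarrow> real^'n \<Rightarrow> real" where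
  "loss_lin bt X y = (1/2) * (\<Sum>i\<in>UNIV. (y $ i - (X $ i) \<bullet> bt)^2)"

definition loss_log :: "real^'p \<Rightarrow> real^'p^'n::finite \<Rightarrow> real^'n \<Rightarrow> real" where
  "loss_log bt X y = (\<Sum>i\<in>UNIV. ln (1 + exp ((X $ i) \<bullet> bt)) - y $ i * ((X $ i) \<bullet> bt))"

definition lossf :: "loss \<Rightarrow> real^'p \<Rightarrow> real^'p^'n::finite \<Rightarrow> real^'n \<Rightarrow> real" where
  "lossf L = (case L of Lin \<Rightarrow> loss_lin | Log \<Rightarrow> loss_log)"

definition obj :: "loss \<Rightarrow> real^'p1^'n \<Rightarrow> real^'p2^'n \<Rightarrow> real^'n \<Rightarrow> real \<Rightarrow> real \<Rightarrow> real
                     \<Rightarrow> real^('p1::finite + 'p2::finite) \<Rightarrow> real" where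
  "obj L X Z y a b c bt =
     (1 / real CARD('n::finite)) *
       (a * lossf L (blk1 bt) X y + b * lossf L (blk2 bt) Z y
        + (c/2) * (norm (X *v blk1 bt - Z *v blk2 bt))^2)"

definition grad :: "(real^'m::finite \<Rightarrow> real) \<Rightarrow> real^'m \<Rightarrow> real^'m" where
  "grad F x = (SOME g. (F has_derivative (\<lambda>h. g \<bullet> h)) (at x))"

definition hess :: "(real^'m::finite \<Rightarrow> real) \<Rightarrow> real^'m \<Rightarrow> (real^'m \<Rightarrow> real^'m)" where
  "hess F x = (SOME H. (grad F has_derivative H) (at x))"

definition sparse :: "nat \<Rightarrow> (real^'m::finite) set" where
  "sparse s = {v. card (supp v) \<le> s}"

definition proj_sparse :: "nat \<Rightarrow> real^'m::finite \<Rightarrow> (real^'m) set" where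
  "proj_sparse s w = {u \<in> sparse s. \<forall>u' \<in> sparse s. norm (w - u) \<le> norm (w - u')}"

definition Sigma_set :: "nat \<Rightarrow> nat \<Rightarrow> (real^('p1::finite + 'p2::finite)) set" where
  "Sigma_set s1 s2 = {bt. blk1 bt \<in> sparse s1 \<and> blk2 bt \<in> sparse s2}"

definition gpna_step :: "(real^('p1::finite + 'p2::finite) \<Rightarrow> real) \<Rightarrow> nat \<Rightarrow> nat
     \<Rightarrow> real \<Rightarrow> real \<Rightarrow> real \<Rightarrow> real
     \<Rightarrow> real^('p1 + 'p2) \<Rightarrow> real^('p1 + 'p2) \<Rightarrow> bool" where
  "gpna_step F s1 s2 \<sigma> \<epsilon> \<alpha>0 \<gamma> bk bk' \<longleftrightarrow>
     (\<exists>sel :: real \<Rightarrow> real^('p1 + 'p2).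
        (\<forall>\<alpha>>0. blk1 (sel \<alpha>) \<in> proj_sparse s1 (blk1 bk - \<alpha> *\<^sub>R blk1 (grad F bk))
              \<and> blk2 (sel \<alpha>) \<in> proj_sparse s2 (blk2 bk - \<alpha> *\<^sub>R blk2 (grad F bk))) \<and>
        (let desc = (\<lambda>w. F w \<le> F bk - (\<sigma>/2) * (norm (w - bk))^2) in
         (\<exists>q::nat. desc (sel (\<alpha>0 * \<gamma>^q))) \<and>
         (let qk = (LEAST q::nat. desc (sel (\<alpha>0 * \<gamma>^q)));
              u = sel (\<alpha>0 * \<gamma>^qk);
              \<Gamma> = supp u;
              H = hess F u;
              g = grad F u;
              C1 = (supp (blk1 bk) = supp (blk1 u) \<and> supp (blk2 bk) = supp (blk2 u));
              C2 = (norm (blk1 g) < \<epsilon> \<and> supp (blk2 bk) = supp (blk2 u));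
              C3 = (norm (blk2 g) < \<epsilon> \<and> supp (blk1 bk) = supp (blk1 u));
              C4 = (norm (blk1 g) < \<epsilon> \<and> norm (blk2 g) < \<epsilon>);
              newton = (\<lambda>v. (\<forall>i\<in>\<Gamma>. H (v - u) $ i = - (g $ i)) \<and> (\<forall>i. i \<notin> \<Gamma> \<longrightarrow> v $ i = 0));
              good = (\<lambda>v. newton v \<and> F v \<le> F u - (\<sigma>/2) * (norm (v - u))^2)
          in if (C1 \<or> C2 \<or> C3 \<or> C4) \<and> (\<exists>v. good v) then good bk' else bk' = u)))"

(* eigenvalues of the principal submatrix M_TT (vectors supported on T) *)
definition eigvals_on :: "real^'m^'m \<Rightarrow> 'm::finite set \<Rightarrow> real set" where
  "eigvals_on M T = {lam. \<exists>x. x \<noteq> 0 \<and> (\<forall>i. i \<notin> T \<longrightarrow> x $ i = 0)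
                           \<and> (\<forall>i\<in>T. (M *v x) $ i = lam * x $ i)}"

definition lam_max :: "real^'m^'m \<Rightarrow> real" where
  "lam_max M = Max (eigvals_on M (UNIV :: 'm::finite set))"

definition lam_min_sub :: "real^'m^'m \<Rightarrow> 'm::finite set \<Rightarrow> real" where
  "lam_min_sub M T = Min (eigvals_on M T)"

definition blockmat :: "real^'p1^'p1 \<Rightarrow> real^'p2^'p1 \<Rightarrow> real^'p1^'p2 \<Rightarrow> real^'p2^'p2
                          \<Rightarrow> real^('p1::finite + 'p2::finite)^('p1 + 'p2)" where
  "blockmat A B C D = (\<chi> r c. (case r of
        Inl i \<Rightarrow> (case c of Inl j \<Rightarrow> A $ i $ j | Inr j \<Rightarrow> B $ i $ j)
      | Inr i \<Rightarrow> (case c of Inl j \<Rightarrow> C $ i $ j | Inr j \<Rightarrow> D $ i $ j)))"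

definition hcat :: "real^'p1^'n \<Rightarrow> real^'p2^'n \<Rightarrow> real^('p1::finite + 'p2::finite)^'n::finite" where
  "hcat X Z = (\<chi> i c. (case c of Inl j \<Rightarrow> X $ i $ j | Inr j \<Rightarrow> Z $ i $ j))"

definition s_regular :: "real^'m^'n \<Rightarrow> nat \<Rightarrow> bool" where
  "s_regular A s \<longleftrightarrow> (\<forall>T :: 'm::finite set. card T = s \<longrightarrow>
       (\<forall>w. (\<forall>j. j \<notin> T \<longrightarrow> w $ j = 0) \<and> A *v w = 0 \<longrightarrow> w = 0))"

definition Qmat :: "loss \<Rightarrow> real^'p1^'n \<Rightarrow> real^'p2^'n \<Rightarrow> real \<Rightarrow> real \<Rightarrow> real
                      \<Rightarrow> real^('p1::finite + 'p2::finite)^('p1 + 'p2)" where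
  "Qmat L X Z a b c =
     (let ka = (case L of Lin \<Rightarrow> a | Log \<Rightarrow> a/4); kb = (case L of Lin \<Rightarrow> b | Log \<Rightarrow> b/4) in
      (1 / real CARD('n::finite)) *\<^sub>R
        blockmat ((ka + c) *\<^sub>R (transpose X ** X)) ((- c) *\<^sub>R (transpose X ** Z))
                 ((- c) *\<^sub>R (transpose Z ** X)) ((kb + c) *\<^sub>R (transpose Z ** Z)))"

definition Lf :: "loss \<Rightarrow> real^'p1^'n \<Rightarrow> real^'p2^'n \<Rightarrow> real \<Rightarrow> real \<Rightarrow> real \<Rightarrow> real" where
  "Lf L X Z a b c = lam_max (Qmat L X Z a b c :: real^('p1::finite + 'p2::finite)^('p1 + 'p2))
     " 

definition lmat :: "loss \<Rightarrow> real^'p1^'n \<Rightarrow> real^'p2^'n \<Rightarrow> real \<Rightarrow> real \<Rightarrow> real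
                      \<Rightarrow> real^('p1::finite + 'p2::finite)^('p1 + 'p2)" where
  "lmat L X Z a b c = (case L of
       Lin \<Rightarrow> Qmat Lin X Z a b c
     | Log \<Rightarrow> (c / real CARD('n::finite)) *\<^sub>R
               blockmat (transpose X ** X) (- (transpose X ** Z))
                        (- (transpose Z ** X)) (transpose Z ** Z))"

definition lf :: "loss \<Rightarrow> real^'p1^'n \<Rightarrow> real^'p2^'n \<Rightarrow> real \<Rightarrow> real \<Rightarrow> real \<Rightarrow> nat \<Rightarrow> real" where
  "lf L X Z a b c s =
     Min {lam_min_sub (lmat L X Z a b c :: real^('p1::finite + 'p2::finite)^('p1 + 'p2)) T
          | T. T \<noteq> {} \<and> card T \<le> s}"

definition l1norm :: "real^'m::finite \<Rightarrow> real" where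
  "l1norm v = (\<Sum>j\<in>UNIV. \<bar>v $ j\<bar>)"

definition Cf :: "real^'p1^'n \<Rightarrow> real^'p2^'n \<Rightarrow> real \<Rightarrow> real \<Rightarrow> real" where
  "Cf X Z a b = (3 * sqrt 2 / real CARD('n::finite)) *
      max (a * Max (range (\<lambda>i. l1norm (X $ i))) * lam_max (transpose X ** X :: real^'p1::finite^'p1))
          (b * Max (range (\<lambda>i. l1norm (Z $ i))) * lam_max (transpose Z ** Z :: real^'p2::finite^'p2))"

end

theory Submission
  imports Defs
begin

text \<open>Near the limit \<open>\<beta>*\<close> the hard-thresholding projections eventually keep a support
  containing that of \<open>\<beta>*\<close>, and the gradient at \<open>\<beta>*\<close> vanishes on it: in each block either
  the support is eventually frozen, or the block of \<open>\<beta>*\<close> has fewer than \<open>s\<^sub>j\<close> nonzeros and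
  its gradient vanishes entirely. Hence one of (C1)-(C4) holds, the Newton system on the
  support is uniquely solvable by restricted strong convexity (\<open>l\<^sub>f > 0\<close>), and its solution
  passes the descent test since it lies within \<open>O(\<parallel>u - \<beta>*\<parallel>\<^sup>2)\<close> of \<open>\<beta>*\<close>. The Newton
  estimate for a Hessian with Lipschitz constant \<open>C\<^sub>f/2\<close> (logistic loss) or \<open>0\<close> (least
  squares), together with \<open>\<parallel>u - \<beta>*\<parallel> \<le> (1 + L\<^sub>f) \<parallel>\<beta>\<^sup>k - \<beta>*\<parallel>\<close>, gives the quadratic bound.\<close>

section \<open>Vectors with two blocks\<close>

lemma sum_UNIV_Plus:
  fixes f :: "('a::finite + 'b::finite) \<Rightarrow> 'c::comm_monoid_add"
  shows "(\<Sum>k\<in>UNIV. f k) = (\<Sum>i\<in>UNIV. f (Inl i)) + (\<Sum>j\<in>UNIV. f (Inr j))"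
  using sum.Plus[of "UNIV :: 'a set" "UNIV :: 'b set" f] by (simp add: comp_def)

lemma blk1_nth [simp]: "blk1 x $ i = x $ Inl i"
  and blk2_nth [simp]: "blk2 x $ j = x $ Inr j"
  by (simp_all add: blk1_def blk2_def)

lemma blk1_diff [simp]: "blk1 (x - y) = blk1 x - blk1 y"
  and blk2_diff [simp]: "blk2 (x - y) = blk2 x - blk2 y"
  and blk1_add [simp]: "blk1 (x + y) = blk1 x + blk1 y"
  and blk2_add [simp]: "blk2 (x + y) = blk2 x + blk2 y"
  and blk1_scaleR [simp]: "blk1 (r *\<^sub>R x) = r *\<^sub>R blk1 x"
  and blk2_scaleR [simp]: "blk2 (r *\<^sub>R x) = r *\<^sub>R blk2 x"
  and blk1_zero [simp]: "blk1 0 = 0"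
  and blk2_zero [simp]: "blk2 0 = 0"
  by (simp_all add: vec_eq_iff)

lemma bounded_linear_blk1: "bounded_linear (blk1 :: real^('p1::finite + 'p2::finite) \<Rightarrow> real^'p1)"
  and bounded_linear_blk2: "bounded_linear (blk2 :: real^('p1::finite + 'p2::finite) \<Rightarrow> real^'p2)"
  by (auto simp: linear_conv_bounded_linear[symmetric] intro!: linearI)

lemma tendsto_blk1: "f \<longlonglongrightarrow> x \<Longrightarrow> (\<lambda>k. blk1 (f k)) \<longlonglongrightarrow> blk1 x"
  by (rule bounded_linear.tendsto[OF bounded_linear_blk1])

lemma tendsto_blk2: "f \<longlonglongrightarrow> x \<Longrightarrow> (\<lambda>k. blk2 (f k)) \<longlonglongrightarrow> blk2 x"
  by (rule bounded_linear.tendsto[OF bounded_linear_blk2])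

lemma inner_blocks:
  fixes x y :: "real^('p1::finite + 'p2::finite)"
  shows "x \<bullet> y = blk1 x \<bullet> blk1 y + blk2 x \<bullet> blk2 y"
  by (simp add: inner_vec_def sum_UNIV_Plus)

lemma norm_blocks_squared:
  fixes x :: "real^('p1::finite + 'p2::finite)"
  shows "(norm x)\<^sup>2 = (norm (blk1 x))\<^sup>2 + (norm (blk2 x))\<^sup>2"
  by (simp add: power2_norm_eq_inner inner_blocks)

lemma norm_blk1_le: "norm (blk1 v) \<le> norm v"
  and norm_blk2_le: "norm (blk2 v) \<le> norm v"
proof -
  have "(norm (blk1 v))\<^sup>2 \<le> (norm v)\<^sup>2" "(norm (blk2 v))\<^sup>2 \<le> (norm v)\<^sup>2"
    using norm_blocks_squared[of v] by simp_all
  then show "norm (blk1 v) \<le> norm v" "norm (blk2 v) \<le> norm v"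
    by (simp_all add: power2_le_iff_abs_le)
qed

lemma supp_blocks: "supp x = Inl ` supp (blk1 x) \<union> Inr ` supp (blk2 x)"
  by (rule set_eqI, case_tac xa) (auto simp: supp_def)

lemma card_supp_blocks:
  fixes x :: "real^('p1::finite + 'p2::finite)"
  shows "card (supp x) = card (supp (blk1 x)) + card (supp (blk2 x))"
  unfolding supp_blocks by (subst card_Un_disjoint) (auto simp: card_image)

lemma supp_subset_blocks:
  assumes "supp (blk1 x) \<subseteq> supp (blk1 u)" "supp (blk2 x) \<subseteq> supp (blk2 u)"
  shows "supp x \<subseteq> supp u"
  using assms unfolding supp_blocks[of x] supp_blocks[of u] by blast

lemma zero_on_supp_blocks:
  assumes "\<forall>j\<in>supp (blk1 u). g $ Inl j = 0" "\<forall>j\<in>supp (blk2 u). g $ Inr j = 0"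
  shows "\<forall>i\<in>supp u. g $ i = 0"
  using assms unfolding supp_blocks[of u] by blast

definition join :: "real^'p1 \<Rightarrow> real^'p2 \<Rightarrow> real^('p1::finite + 'p2::finite)" where
  "join p q = (\<chi> k. case k of Inl i \<Rightarrow> p $ i | Inr j \<Rightarrow> q $ j)"

lemma blk_join [simp]: "blk1 (join p q) = p" "blk2 (join p q) = q"
  by (simp_all add: join_def vec_eq_iff)

lemma inner_join: "join p q \<bullet> h = p \<bullet> blk1 h + q \<bullet> blk2 h"
  using inner_blocks[of "join p q" h] by simp

lemma join_diff: "join p q - join p' q' = join (p - p') (q - q')"
  by (simp add: join_def vec_eq_iff split: sum.split)

lemma norm_join_le: "norm (join p q) \<le> norm p + norm q"
proof -
  have "(norm (join p q))\<^sup>2 \<le> (norm p + norm q)\<^sup>2"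
    using norm_blocks_squared[of "join p q"] by (simp add: power2_sum)
  then show ?thesis by (simp add: power2_le_iff_abs_le)
qed

lemma has_derivative_vec_componentwise:
  fixes f :: "'a::real_normed_vector \<Rightarrow> real^'n::finite"
  assumes "\<And>i. ((\<lambda>x. f x $ i) has_derivative (\<lambda>h. f' h $ i)) (at a)"
  shows "(f has_derivative f') (at a)"
proof -
  have "(f has_derivative f') (at a within UNIV)"
  proof (subst has_derivative_componentwise_within, intro ballI)
    fix i :: "real^'n" assume "i \<in> Basis"
    then obtain j where j: "i = axis j 1" by (auto simp: Basis_vec_def)
    show "((\<lambda>x. f x \<bullet> i) has_derivative (\<lambda>x. f' x \<bullet> i)) (at a within UNIV)"
      using assms[of j] by (simp add: j inner_axis)
  qed
  then show ?thesis by simp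
qed

lemma has_derivative_join:
  assumes "(P has_derivative P') (at x)" "(Q has_derivative Q') (at x)"
  shows "((\<lambda>x. join (P x) (Q x)) has_derivative (\<lambda>h. join (P' h) (Q' h))) (at x)"
proof (rule has_derivative_vec_componentwise)
  fix k
  show "((\<lambda>x. join (P x) (Q x) $ k) has_derivative (\<lambda>h. join (P' h) (Q' h) $ k)) (at x)"
    using bounded_linear.has_derivative[OF bounded_linear_vec_nth assms(1)]
      bounded_linear.has_derivative[OF bounded_linear_vec_nth assms(2)]
    by (cases k) (simp_all add: join_def)
qed

section \<open>Projection onto sparse vectors\<close>

definition vec_upd :: "real^'m \<Rightarrow> 'm::finite \<Rightarrow> real \<Rightarrow> real^'m" where
  "vec_upd u i r = (\<chi> k. if k = i then r else u $ k)"

lemma vec_upd_nth: "vec_upd u i r $ k = (if k = i then r else u $ k)"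
  by (simp add: vec_upd_def)

lemma supp_vec_upd: "supp (vec_upd u i r) = (if r = 0 then supp u - {i} else insert i (supp u))"
  by (auto simp: supp_def vec_upd_def)

lemma norm_diff_vec_upd_squared:
  fixes w u :: "real^'m::finite"
  shows "(norm (w - vec_upd u i r))\<^sup>2 = (norm (w - u))\<^sup>2 - (w $ i - u $ i)\<^sup>2 + (w $ i - r)\<^sup>2"
proof -
  have "(norm x)\<^sup>2 = (x $ i)\<^sup>2 + (\<Sum>k\<in>UNIV - {i}. (x $ k)\<^sup>2)" for x :: "real^'m"
    unfolding power2_norm_eq_inner inner_vec_def
    by (simp add: power2_eq_square sum.remove[of _ i])
  moreover have "(\<Sum>k\<in>UNIV - {i}. ((w - vec_upd u i r) $ k)\<^sup>2) = (\<Sum>k\<in>UNIV - {i}. ((w - u) $ k)\<^sup>2)"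
    by (auto simp: vec_upd_def intro!: sum.cong)
  ultimately show ?thesis by (simp add: vec_upd_nth)
qed

lemma proj_sparseD:
  assumes "u \<in> proj_sparse s w" "u' \<in> sparse s"
  shows "(norm (w - u))\<^sup>2 \<le> (norm (w - u'))\<^sup>2"
  using assms by (auto simp: proj_sparse_def intro: power_mono)

lemma proj_sparse_nth:
  assumes u: "u \<in> proj_sparse s w" and i: "i \<in> supp u"
  shows "u $ i = w $ i"
proof -
  have "supp (vec_upd u i (w $ i)) \<subseteq> supp u" using i by (auto simp: supp_vec_upd)
  then have "card (supp (vec_upd u i (w $ i))) \<le> card (supp u)" by (simp add: card_mono)
  with u have "vec_upd u i (w $ i) \<in> sparse s" by (auto simp: proj_sparse_def sparse_def)
  from proj_sparseD[OF u this] have "(w $ i - u $ i)\<^sup>2 \<le> 0"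
    by (simp add: norm_diff_vec_upd_squared)
  then show ?thesis by simp
qed

text \<open>Hard thresholding keeps the largest entries: swapping a kept entry for a
  discarded one must not decrease the distance.\<close>
lemma proj_sparse_abs_le:
  assumes u: "u \<in> proj_sparse s w" and i: "i \<notin> supp u" and m: "m \<in> supp u"
  shows "\<bar>w $ i\<bar> \<le> \<bar>w $ m\<bar>"
proof -
  define u' where "u' = vec_upd (vec_upd u m 0) i (w $ i)"
  have "card (supp u') \<le> card (insert i (supp u - {m}))"
    by (rule card_mono) (auto simp: u'_def supp_vec_upd)
  also have "\<dots> = card (supp u)"
  proof -
    have "card (supp u) > 0" using m by (auto simp: card_gt_0_iff)
    then show ?thesis using i m by (simp add: card_insert_if)
  qed
  finally have "u' \<in> sparse s" using u by (auto simp: proj_sparse_def sparse_def)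
  note le = proj_sparseD[OF u this]
  have "i \<noteq> m" "u $ i = 0" using i m by (auto simp: supp_def)
  moreover have "u $ m = w $ m" by (rule proj_sparse_nth[OF u m])
  ultimately have "(norm (w - u'))\<^sup>2 = (norm (w - u))\<^sup>2 + (w $ m)\<^sup>2 - (w $ i)\<^sup>2"
    unfolding u'_def by (simp add: norm_diff_vec_upd_squared vec_upd_nth)
  with le have "(w $ i)\<^sup>2 \<le> (w $ m)\<^sup>2" by linarith
  then show ?thesis by (simp only: abs_le_square_iff)
qed

lemma proj_sparse_nth_eq_0:
  assumes u: "u \<in> proj_sparse s w" and i: "i \<notin> supp u" and c: "card (supp u) < s"
  shows "w $ i = 0"
proof -
  have "card (supp (vec_upd u i (w $ i))) \<le> Suc (card (supp u))"
    by (auto simp: supp_vec_upd card_insert_if)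
  with c have "vec_upd u i (w $ i) \<in> sparse s" by (simp add: sparse_def)
  from proj_sparseD[OF u this] i have "(w $ i)\<^sup>2 \<le> 0"
    by (simp add: norm_diff_vec_upd_squared supp_def)
  then show ?thesis by simp
qed

lemma proj_sparse_descent:
  assumes u: "u \<in> proj_sparse s (b - \<alpha> *\<^sub>R g)" and b: "b \<in> sparse s" and \<alpha>: "\<alpha> > 0"
  shows "g \<bullet> (u - b) \<le> - ((norm (u - b))\<^sup>2 / (2 * \<alpha>))"
proof -
  have "(norm ((b - \<alpha> *\<^sub>R g) - u))\<^sup>2 \<le> (norm (\<alpha> *\<^sub>R g))\<^sup>2"
    using proj_sparseD[OF u b] by simp
  moreover have "(norm ((b - \<alpha> *\<^sub>R g) - u))\<^sup>2
      = (norm (u - b))\<^sup>2 + 2 * \<alpha> * (g \<bullet> (u - b)) + (norm (\<alpha> *\<^sub>R g))\<^sup>2"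
    unfolding power2_norm_eq_inner
    by (simp add: inner_diff_left inner_diff_right inner_commute right_diff_distrib)
  ultimately have "(norm (u - b))\<^sup>2 + 2 * \<alpha> * (g \<bullet> (u - b)) \<le> 0" by linarith
  with \<alpha> show ?thesis by (simp add: field_simps)
qed

section \<open>Rayleigh quotients of symmetric matrices\<close>

definition symmetric_matrix :: "real^'m^'m \<Rightarrow> bool" where
  "symmetric_matrix M \<longleftrightarrow> transpose M = M"

lemma symmetric_matrix_inner_swap:
  fixes M :: "real^'m::finite^'m"
  assumes "symmetric_matrix M"
  shows "x \<bullet> (M *v y) = y \<bullet> (M *v x)"
proof -
  have "x \<bullet> (M *v y) = (x v* M) \<bullet> y" by (simp add: dot_lmul_matrix)
  also have "x v* M = transpose M *v x" by simp
  also have "\<dots> = M *v x" using assms by (simp add: symmetric_matrix_def)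
  finally show ?thesis by (simp add: inner_commute)
qed

lemma transpose_uminus: "transpose (- M) = - transpose (M::real^'n::finite^'m::finite)"
  by (simp add: transpose_def vec_eq_iff)

lemma symmetric_matrix_uminus: "symmetric_matrix (M::real^'m::finite^'m) \<Longrightarrow> symmetric_matrix (- M)"
  by (simp add: symmetric_matrix_def transpose_uminus)

lemma uminus_matrix_vector_mult: "(- M) *v x = - (M *v (x::real^'m::finite))"
  by (simp add: vec_eq_iff matrix_vector_mult_def sum_negf)

lemma symmetric_matrix_gram: "symmetric_matrix (transpose X ** (X::real^'p::finite^'n::finite))"
  by (simp add: symmetric_matrix_def matrix_transpose_mul)

lemma inner_supported:
  fixes x y :: "real^'m::finite"
  assumes "\<forall>i. i \<notin> T \<longrightarrow> x $ i = 0"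
  shows "x \<bullet> y = (\<Sum>i\<in>T. x $ i * y $ i)"
  unfolding inner_vec_def inner_real_def by (rule sum.mono_neutral_right) (use assms in auto)

lemma eigvector_quadratic_form:
  fixes M :: "real^'m::finite^'m"
  assumes "\<forall>i. i \<notin> T \<longrightarrow> x $ i = 0" "\<forall>i\<in>T. (M *v x) $ i = lam * x $ i"
  shows "x \<bullet> (M *v x) = lam * (norm x)\<^sup>2"
proof -
  have "x \<bullet> (M *v x) = lam * (\<Sum>i\<in>T. x $ i * x $ i)"
    using inner_supported[OF assms(1)] assms(2) by (simp add: sum_distrib_left algebra_simps)
  then show ?thesis using inner_supported[OF assms(1), of x] by (simp add: power2_norm_eq_inner)
qed

lemma linear_dominated_by_quadratic:
  fixes A B :: real
  assumes "\<And>t. A * t + B * t\<^sup>2 \<ge> 0"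
  shows "A = 0"
proof (rule ccontr)
  assume A: "A \<noteq> 0"
  define e where "e = 1 / (\<bar>B\<bar> + 1)"
  have e: "e > 0" "B * e < 1"
    unfolding e_def by (auto simp: field_simps add_pos_nonneg abs_if)
  have "A * (- A * e) + B * (- A * e)\<^sup>2 = (A\<^sup>2 * e) * (B * e - 1)"
    by (simp add: power2_eq_square algebra_simps)
  also have "\<dots> < 0" using A e by (intro mult_pos_neg) simp_all
  finally show False using assms[of "- A * e"] by simp
qed

lemma quadratic_form_min_on_coordinate_subspace:
  fixes M :: "real^'m::finite^'m"
  assumes T: "T \<noteq> {}"
  shows "\<exists>x0. norm x0 = 1 \<and> (\<forall>i. i \<notin> T \<longrightarrow> x0 $ i = 0) \<and>
           (\<forall>x. (\<forall>i. i \<notin> T \<longrightarrow> x $ i = 0) \<longrightarrow> (x0 \<bullet> (M *v x0)) * (norm x)\<^sup>2 \<le> x \<bullet> (M *v x))"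
proof -
  define V where "V = {x::real^'m. \<forall>i. i \<notin> T \<longrightarrow> x $ i = 0}"
  define S where "S = sphere 0 1 \<inter> V"
  have "closed V" unfolding V_def
    by (intro closed_Collect_all closed_Collect_imp open_Collect_const closed_Collect_eq)
       (auto intro: continuous_intros)
  then have "compact S" unfolding S_def by (intro compact_Int_closed compact_sphere)
  obtain i0 where "i0 \<in> T" using T by auto
  then have "axis i0 1 \<in> S" by (auto simp: S_def V_def) (auto simp: axis_def)
  then have "S \<noteq> {}" by auto
  have "continuous_on S (\<lambda>x. x \<bullet> (M *v x))" by (intro continuous_intros)
  then obtain x0 where x0S: "x0 \<in> S" and x0min: "\<forall>y\<in>S. x0 \<bullet> (M *v x0) \<le> y \<bullet> (M *v y)"
    using continuous_attains_inf[OF \<open>compact S\<close> \<open>S \<noteq> {}\<close>] by blast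
  have "x \<bullet> (M *v x) \<ge> (x0 \<bullet> (M *v x0)) * (norm x)\<^sup>2" if "x \<in> V" for x
  proof (cases "x = 0")
    case False
    define y where "y = (1 / norm x) *\<^sub>R x"
    have "y \<in> S" using False that by (auto simp: S_def V_def y_def)
    then have "x0 \<bullet> (M *v x0) \<le> y \<bullet> (M *v y)" using x0min by simp
    also have "y \<bullet> (M *v y) = (x \<bullet> (M *v x)) / (norm x)\<^sup>2"
      by (simp add: y_def matrix_vector_mult_scaleR power2_eq_square)
    finally show ?thesis using False by (simp add: field_simps)
  qed simp
  with x0S show ?thesis unfolding S_def V_def by auto
qed

text \<open>The minimum of the quadratic form on the unit sphere of the coordinate subspace
  indexed by \<open>T\<close> is an eigenvalue of \<open>M\<^sub>T\<^sub>T\<close>: the first-order condition at the minimiser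
  is the eigenvalue equation.\<close>
lemma min_eigval_on_exists:
  fixes M :: "real^'m::finite^'m"
  assumes sym: "symmetric_matrix M" and T: "T \<noteq> {}"
  shows "\<exists>lam0\<in>eigvals_on M T. \<forall>x. (\<forall>i. i \<notin> T \<longrightarrow> x $ i = 0) \<longrightarrow> lam0 * (norm x)\<^sup>2 \<le> x \<bullet> (M *v x)"
proof -
  define V where "V = {x::real^'m. \<forall>i. i \<notin> T \<longrightarrow> x $ i = 0}"
  obtain x0 where nx0: "norm x0 = 1" and x0V: "x0 \<in> V"
    and min: "\<forall>x. (\<forall>i. i \<notin> T \<longrightarrow> x $ i = 0) \<longrightarrow> (x0 \<bullet> (M *v x0)) * (norm x)\<^sup>2 \<le> x \<bullet> (M *v x)"
    using quadratic_form_min_on_coordinate_subspace[OF T, of M] unfolding V_def by blast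
  define lam0 where "lam0 = x0 \<bullet> (M *v x0)"
  have ray: "x \<bullet> (M *v x) \<ge> lam0 * (norm x)\<^sup>2" if "x \<in> V" for x
    using min that by (simp add: lam0_def V_def)
  define r where "r = M *v x0 - lam0 *\<^sub>R x0"
  define d where "d = (\<chi> i. if i \<in> T then r $ i else 0)"
  have dV: "d \<in> V" by (simp add: d_def V_def)
  have "(2 * (d \<bullet> r)) * t + (d \<bullet> (M *v d) - lam0 * (norm d)\<^sup>2) * t\<^sup>2 \<ge> 0" for t
  proof -
    have "x0 + t *\<^sub>R d \<in> V" using x0V dV by (simp add: V_def)
    then have "(x0 + t *\<^sub>R d) \<bullet> (M *v (x0 + t *\<^sub>R d)) \<ge> lam0 * (norm (x0 + t *\<^sub>R d))\<^sup>2"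
      by (rule ray)
    moreover have "(x0 + t *\<^sub>R d) \<bullet> (M *v (x0 + t *\<^sub>R d))
        = lam0 + 2 * t * (d \<bullet> (M *v x0)) + t\<^sup>2 * (d \<bullet> (M *v d))"
      using symmetric_matrix_inner_swap[OF sym, of x0 d]
      by (simp add: matrix_vector_right_distrib matrix_vector_mult_scaleR inner_add_left
          inner_add_right lam0_def power2_eq_square algebra_simps)
    moreover have "(norm (x0 + t *\<^sub>R d))\<^sup>2 = 1 + 2 * t * (d \<bullet> x0) + t\<^sup>2 * (norm d)\<^sup>2"
    proof -
      have "x0 \<bullet> x0 = 1" using nx0 power2_norm_eq_inner[of x0] by simp
      then show ?thesis unfolding power2_norm_eq_inner
        by (simp add: inner_add_left inner_add_right inner_commute power2_eq_square algebra_simps)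
    qed
    moreover have "d \<bullet> (M *v x0) - lam0 * (d \<bullet> x0) = d \<bullet> r"
      by (simp add: r_def inner_diff_right)
    ultimately show ?thesis by (simp add: algebra_simps)
  qed
  then have "2 * (d \<bullet> r) = 0" by (rule linear_dominated_by_quadratic)
  moreover have "d \<bullet> r = d \<bullet> d"
    using dV inner_supported[of T d r] inner_supported[of T d d] by (simp add: V_def d_def)
  ultimately have "d = 0" by simp
  have "\<forall>i\<in>T. (M *v x0) $ i = lam0 * x0 $ i"
  proof
    fix i assume "i \<in> T"
    with \<open>d = 0\<close> have "r $ i = 0" by (simp add: d_def vec_eq_iff) (metis)
    then show "(M *v x0) $ i = lam0 * x0 $ i" by (simp add: r_def)
  qed
  moreover have "x0 \<noteq> 0" using nx0 by auto
  ultimately have "lam0 \<in> eigvals_on M T"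
    using x0V unfolding eigvals_on_def V_def by blast
  with ray show ?thesis unfolding V_def by blast
qed

text \<open>Eigenvectors for distinct eigenvalues are orthogonal, hence there are finitely many.\<close>
lemma finite_eigvals_on:
  fixes M :: "real^'m::finite^'m"
  assumes sym: "symmetric_matrix M"
  shows "finite (eigvals_on M T)"
proof -
  define E where "E = eigvals_on M T"
  define e where "e lam = (SOME x. x \<noteq> 0 \<and> (\<forall>i. i \<notin> T \<longrightarrow> x $ i = 0)
                               \<and> (\<forall>i\<in>T. (M *v x) $ i = lam * x $ i))" for lam
  have e: "e lam \<noteq> 0 \<and> (\<forall>i. i \<notin> T \<longrightarrow> e lam $ i = 0) \<and> (\<forall>i\<in>T. (M *v e lam) $ i = lam * e lam $ i)"
    if "lam \<in> E" for lam
  proof -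
    from that have "\<exists>x. x \<noteq> 0 \<and> (\<forall>i. i \<notin> T \<longrightarrow> x $ i = 0) \<and> (\<forall>i\<in>T. (M *v x) $ i = lam * x $ i)"
      by (simp add: E_def eigvals_on_def)
    then show ?thesis unfolding e_def by (rule someI_ex)
  qed
  have inner_eq: "e lam \<bullet> (M *v e mu) = mu * (e lam \<bullet> e mu)" if "lam \<in> E" "mu \<in> E" for lam mu
  proof -
    have "e lam \<bullet> (M *v e mu) = (\<Sum>i\<in>T. e lam $ i * (mu * e mu $ i))"
      using inner_supported[of T "e lam"] e[OF that(1)] e[OF that(2)] by simp
    also have "\<dots> = mu * (\<Sum>i\<in>T. e lam $ i * e mu $ i)"
      by (simp add: sum_distrib_left algebra_simps)
    also have "(\<Sum>i\<in>T. e lam $ i * e mu $ i) = e lam \<bullet> e mu"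
      using inner_supported[of T "e lam"] e[OF that(1)] by simp
    finally show ?thesis .
  qed
  have orth: "e lam \<bullet> e mu = 0" if "lam \<in> E" "mu \<in> E" "lam \<noteq> mu" for lam mu
  proof -
    have "mu * (e lam \<bullet> e mu) = lam * (e mu \<bullet> e lam)"
      using inner_eq[OF that(1,2)] inner_eq[OF that(2,1)]
        symmetric_matrix_inner_swap[OF sym, of "e lam" "e mu"] by simp
    then have "(mu - lam) * (e lam \<bullet> e mu) = 0" by (simp add: inner_commute algebra_simps)
    with that show ?thesis by simp
  qed
  have inj: "inj_on e E"
  proof (rule inj_onI)
    fix lam mu assume "lam \<in> E" "mu \<in> E" "e lam = e mu"
    then show "lam = mu" using orth[of lam mu] e[of lam] by (auto simp: inner_eq_zero_iff)
  qed
  have "pairwise orthogonal (e ` E)"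
    unfolding pairwise_def orthogonal_def using orth by auto
  moreover have "0 \<notin> e ` E" using e by auto
  ultimately have "independent (e ` E)" by (rule pairwise_orthogonal_independent)
  then have "finite (e ` E)" by (rule independent_imp_finite)
  from finite_imageD[OF this inj] show ?thesis by (simp add: E_def)
qed

lemma lam_min_sub_le_quadratic_form:
  fixes M :: "real^'m::finite^'m"
  assumes sym: "symmetric_matrix M" and T: "T \<noteq> {}" and xT: "\<forall>i. i \<notin> T \<longrightarrow> x $ i = 0"
  shows "lam_min_sub M T * (norm x)\<^sup>2 \<le> x \<bullet> (M *v x)"
proof -
  obtain lam0 where l0: "lam0 \<in> eigvals_on M T"
    and ray: "\<forall>x. (\<forall>i. i \<notin> T \<longrightarrow> x $ i = 0) \<longrightarrow> lam0 * (norm x)\<^sup>2 \<le> x \<bullet> (M *v x)"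
    using min_eigval_on_exists[OF sym T] ..
  have "lam0 \<le> lam" if lam: "lam \<in> eigvals_on M T" for lam
  proof -
    obtain y where y: "y \<noteq> 0" "\<forall>i. i \<notin> T \<longrightarrow> y $ i = 0" "\<forall>i\<in>T. (M *v y) $ i = lam * y $ i"
      using lam unfolding eigvals_on_def by blast
    have "lam0 * (norm y)\<^sup>2 \<le> y \<bullet> (M *v y)" using ray y(2) by blast
    then have "lam0 * (norm y)\<^sup>2 \<le> lam * (norm y)\<^sup>2"
      using eigvector_quadratic_form[OF y(2,3)] by simp
    then show ?thesis using y(1) by simp
  qed
  then have "lam_min_sub M T = lam0"
    unfolding lam_min_sub_def using finite_eigvals_on[OF sym] l0
    by (intro antisym Min_le Min.boundedI) auto
  with ray xT show ?thesis by simp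
qed

lemma quadratic_form_le_lam_max:
  fixes M :: "real^'m::finite^'m"
  assumes sym: "symmetric_matrix M"
  shows "x \<bullet> (M *v x) \<le> lam_max M * (norm x)\<^sup>2"
proof -
  obtain lam0 where l0: "lam0 \<in> eigvals_on (- M) UNIV"
    and ray: "\<forall>x. lam0 * (norm x)\<^sup>2 \<le> x \<bullet> ((- M) *v x)"
    using min_eigval_on_exists[OF symmetric_matrix_uminus[OF sym] UNIV_not_empty] by auto
  have eig_iff: "lam \<in> eigvals_on M UNIV \<longleftrightarrow> - lam \<in> eigvals_on (- M) UNIV" for lam
    by (simp add: eigvals_on_def uminus_matrix_vector_mult)
  have "lam \<le> - lam0" if lam: "lam \<in> eigvals_on M UNIV" for lam
  proof -
    obtain y where y: "y \<noteq> 0" "\<forall>i\<in>UNIV. (M *v y) $ i = lam * y $ i"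
      using lam unfolding eigvals_on_def by blast
    have "lam0 * (norm y)\<^sup>2 \<le> y \<bullet> ((- M) *v y)" using ray by blast
    then have "lam0 * (norm y)\<^sup>2 \<le> (- lam) * (norm y)\<^sup>2"
      using eigvector_quadratic_form[of UNIV y M lam] y(2)
      by (simp add: uminus_matrix_vector_mult)
    moreover have "(norm y)\<^sup>2 > 0" using y(1) by simp
    ultimately have "lam0 \<le> - lam" by (rule mult_right_le_imp_le)
    then show ?thesis by simp
  qed
  then have "lam_max M = - lam0"
    unfolding lam_max_def using finite_eigvals_on[OF sym] l0 eig_iff[of "- lam0"]
    by (intro antisym Max_ge Max.boundedI) auto
  then show ?thesis using ray[rule_format, of x] by (simp add: uminus_matrix_vector_mult)
qed

section \<open>Projected gradient steps near a limit point\<close>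

lemma LIMSEQ_eq_0_if_dominated:
  fixes a b :: "nat \<Rightarrow> real"
  assumes "a \<longlonglongrightarrow> A" "b \<longlonglongrightarrow> 0" "K > 0" "\<forall>\<^sub>F k in sequentially. K * norm (a k) \<le> norm (b k)"
  shows "A = 0"
proof -
  have "\<forall>\<^sub>F k in sequentially. norm (a k) \<le> norm (b k) * (1 / K)"
    using assms(4) by eventually_elim (use \<open>K > 0\<close> in \<open>simp add: field_simps\<close>)
  from LIMSEQ_unique[OF assms(1) tendsto_0_le[OF assms(2) this]] show ?thesis .
qed

lemma eventually_supp_subset:
  fixes b :: "nat \<Rightarrow> real^'q::finite"
  assumes "b \<longlonglongrightarrow> bs"
  shows "\<forall>\<^sub>F k in sequentially. supp bs \<subseteq> supp (b k)"
proof -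
  have "\<forall>\<^sub>F k in sequentially. b k $ j \<noteq> 0" if "j \<in> supp bs" for j
    using tendsto_imp_eventually_ne[OF tendsto_vec_nth[OF assms]] that by (simp add: supp_def)
  then have "\<forall>\<^sub>F k in sequentially. \<forall>j\<in>supp bs. b k $ j \<noteq> 0"
    by (intro eventually_ball_finite) auto
  then show ?thesis by eventually_elim (auto simp: supp_def)
qed

context
  fixes b u g :: "nat \<Rightarrow> real^'q::finite" and A :: "nat \<Rightarrow> real"
    and bs gs :: "real^'q" and sj :: nat and amin :: real
  assumes proj: "\<And>k. u k \<in> proj_sparse sj (b k - A k *\<^sub>R g k)"
    and b_sparse: "\<And>k. b k \<in> sparse sj"
    and b_lim: "b \<longlonglongrightarrow> bs" and u_lim: "u \<longlonglongrightarrow> bs" and g_lim: "g \<longlonglongrightarrow> gs"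
    and amin: "amin > 0" "\<And>k. amin \<le> A k"
begin

lemma card_supp_limit_le: "card (supp bs) \<le> sj"
proof -
  obtain k where "supp bs \<subseteq> supp (b k)"
    using eventually_supp_subset[OF b_lim] by (auto simp: eventually_sequentially)
  then have "card (supp bs) \<le> card (supp (b k))" by (simp add: card_mono)
  with b_sparse[of k] show ?thesis by (simp add: sparse_def)
qed

lemma abs_grad_le_step_on_supp:
  assumes "j \<in> supp (u k)"
  shows "amin * \<bar>g k $ j\<bar> \<le> \<bar>b k $ j - u k $ j\<bar>"
proof -
  have "A k * \<bar>g k $ j\<bar> = \<bar>b k $ j - u k $ j\<bar>"
    using proj_sparse_nth[OF proj assms] amin(1) amin(2)[of k] by (simp add: abs_mult)
  moreover have "amin * \<bar>g k $ j\<bar> \<le> A k * \<bar>g k $ j\<bar>"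
    using amin(2)[of k] by (simp add: mult_right_mono)
  ultimately show ?thesis by simp
qed

lemma limit_grad_zero_on_supp: "\<forall>j\<in>supp bs. gs $ j = 0"
proof
  fix j assume j: "j \<in> supp bs"
  have "\<forall>\<^sub>F k in sequentially. j \<in> supp (u k)"
    using eventually_supp_subset[OF u_lim] by eventually_elim (use j in blast)
  then have "\<forall>\<^sub>F k in sequentially. amin * norm (g k $ j) \<le> norm (b k $ j - u k $ j)"
    by eventually_elim (simp add: abs_grad_le_step_on_supp)
  moreover have "(\<lambda>k. b k $ j - u k $ j) \<longlonglongrightarrow> 0"
    using tendsto_diff[OF tendsto_vec_nth[OF b_lim, of j] tendsto_vec_nth[OF u_lim, of j]] by simp
  ultimately show "gs $ j = 0"
    using LIMSEQ_eq_0_if_dominated[OF tendsto_vec_nth[OF g_lim] _ amin(1)] by blast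
qed

text \<open>Once the projection keeps more entries than the limit has, some kept entry lies outside
  the limit support; it dominates every discarded entry, and all such entries tend to zero.\<close>
lemma abs_step_off_limit_supp_le:
  assumes j: "j \<notin> supp bs" and lt: "card (supp bs) < sj"
  shows "\<bar>b k $ j - A k * g k $ j\<bar> \<le> (\<Sum>m\<in>- supp bs. \<bar>u k $ m\<bar>)"
proof -
  define w where "w = b k - A k *\<^sub>R g k"
  have u: "u k \<in> proj_sparse sj w" using proj by (simp add: w_def)
  have tail: "\<bar>u k $ m\<bar> \<le> (\<Sum>m\<in>- supp bs. \<bar>u k $ m\<bar>)" if "m \<notin> supp bs" for m
    using that by (intro member_le_sum) auto
  have "\<bar>w $ j\<bar> \<le> (\<Sum>m\<in>- supp bs. \<bar>u k $ m\<bar>)"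
  proof (cases "j \<in> supp (u k)")
    case True
    then show ?thesis using proj_sparse_nth[OF u True] tail[OF j] by simp
  next
    case notin: False
    show ?thesis
    proof (cases "card (supp (u k)) < sj")
      case True
      then show ?thesis using proj_sparse_nth_eq_0[OF u notin] by (simp add: sum_nonneg)
    next
      case False
      then have "\<not> supp (u k) \<subseteq> supp bs" using lt card_mono[of "supp bs" "supp (u k)"] by auto
      then obtain m where m: "m \<in> supp (u k)" "m \<notin> supp bs" by blast
      have "\<bar>w $ j\<bar> \<le> \<bar>w $ m\<bar>" by (rule proj_sparse_abs_le[OF u notin m(1)])
      also have "w $ m = u k $ m" using proj_sparse_nth[OF u m(1)] by simp
      finally show ?thesis using tail[OF m(2)] by linarith
    qed
  qed
  then show ?thesis by (simp add: w_def)
qed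

lemma limit_grad_zero_if_card_less:
  assumes lt: "card (supp bs) < sj"
  shows "gs = 0"
proof -
  have "gs $ j = 0" for j
  proof (cases "j \<in> supp bs")
    case True
    then show ?thesis using limit_grad_zero_on_supp by simp
  next
    case False
    define e where "e k = \<bar>b k $ j\<bar> + (\<Sum>m\<in>- supp bs. \<bar>u k $ m\<bar>)" for k
    have "(\<lambda>k. \<bar>b k $ j\<bar> + (\<Sum>m\<in>- supp bs. \<bar>u k $ m\<bar>))
          \<longlonglongrightarrow> \<bar>bs $ j\<bar> + (\<Sum>m\<in>- supp bs. \<bar>bs $ m\<bar>)"
      by (intro tendsto_intros tendsto_vec_nth b_lim u_lim)
    then have e0: "e \<longlonglongrightarrow> 0" using False unfolding e_def by (simp add: supp_def)
    have dom: "amin * norm (g k $ j) \<le> norm (e k)" for k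
    proof -
      have "amin * \<bar>g k $ j\<bar> \<le> A k * \<bar>g k $ j\<bar>"
        using amin(2)[of k] by (simp add: mult_right_mono)
      also have "\<dots> \<le> \<bar>b k $ j\<bar> + \<bar>b k $ j - A k * g k $ j\<bar>"
        using amin(1) amin(2)[of k] by (simp add: abs_mult[symmetric])
      also have "\<dots> \<le> e k" using abs_step_off_limit_supp_le[OF False lt] by (simp add: e_def)
      finally show ?thesis by simp
    qed
    then show ?thesis
      by (intro LIMSEQ_eq_0_if_dominated[OF tendsto_vec_nth[OF g_lim] e0 amin(1)] always_eventually allI dom)
  qed
  then show ?thesis by (simp add: vec_eq_iff)
qed

lemma eventually_supp_eq_if_card_eq:
  assumes eq: "card (supp bs) = sj"
  shows "\<forall>\<^sub>F k in sequentially. supp (b k) = supp bs \<and> supp (u k) = supp bs"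
  using eventually_supp_subset[OF b_lim] eventually_supp_subset[OF u_lim]
proof eventually_elim
  case (elim k)
  have "card (supp (b k)) \<le> card (supp bs)" "card (supp (u k)) \<le> card (supp bs)"
    using b_sparse[of k] proj[of k] eq by (simp_all add: proj_sparse_def sparse_def)
  with elim show ?case by (metis card_seteq finite)
qed

text \<open>Either the support of the block is eventually frozen, or the block gradient at the
  limit vanishes, so that any sequence \<open>h\<close> tending to it eventually has small norm.\<close>
lemma block_eventually_stationary:
  assumes h_lim: "h \<longlonglongrightarrow> gs" and \<epsilon>: "\<epsilon> > 0"
  shows "\<forall>\<^sub>F k in sequentially. supp bs \<subseteq> supp (u k) \<and> (\<forall>j\<in>supp (u k). gs $ j = 0)
                               \<and> (supp (b k) = supp (u k) \<or> norm (h k) < \<epsilon>)"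
proof (cases "card (supp bs) = sj")
  case True
  show ?thesis
    using eventually_supp_eq_if_card_eq[OF True] by eventually_elim (use limit_grad_zero_on_supp in auto)
next
  case False
  then have "gs = 0" using card_supp_limit_le limit_grad_zero_if_card_less by simp
  then have "(\<lambda>k. norm (h k)) \<longlonglongrightarrow> 0" using h_lim by (simp add: tendsto_norm_zero_iff)
  then have "\<forall>\<^sub>F k in sequentially. norm (h k) < \<epsilon>" using \<epsilon> by (intro order_tendstoD(2))
  with eventually_supp_subset[OF u_lim] show ?thesis
    by eventually_elim (simp add: \<open>gs = 0\<close>)
qed

end

text \<open>The decrease \<open>F (\<beta> k) - F (\<beta> (Suc k))\<close> tends to zero and dominates the squared step.\<close>
lemma tendsto_trial_points:
  fixes F :: "'a::real_normed_vector \<Rightarrow> real"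
  assumes contF: "isCont F bs" and \<sigma>: "\<sigma> > 0" and lim: "\<beta> \<longlonglongrightarrow> bs"
    and decr: "\<And>k. F (U k) \<le> F (\<beta> k) - (\<sigma>/2) * (norm (U k - \<beta> k))\<^sup>2"
    and next_le: "\<And>k. F (\<beta> (Suc k)) \<le> F (U k)"
  shows "U \<longlonglongrightarrow> bs"
proof -
  have lF: "(\<lambda>k. F (\<beta> k)) \<longlonglongrightarrow> F bs" by (rule isCont_tendsto_compose[OF contF lim])
  have "(\<lambda>k. (2/\<sigma>) * (F (\<beta> k) - F (\<beta> (Suc k)))) \<longlonglongrightarrow> (2/\<sigma>) * (F bs - F bs)"
    by (intro tendsto_intros lF LIMSEQ_Suc[OF lF])
  then have upper_lim: "(\<lambda>k. (2/\<sigma>) * (F (\<beta> k) - F (\<beta> (Suc k)))) \<longlonglongrightarrow> 0" by simp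
  have upper: "(norm (U k - \<beta> k))\<^sup>2 \<le> (2/\<sigma>) * (F (\<beta> k) - F (\<beta> (Suc k)))" for k
  proof -
    have "(\<sigma>/2) * (norm (U k - \<beta> k))\<^sup>2 \<le> F (\<beta> k) - F (\<beta> (Suc k))"
      using decr[of k] next_le[of k] by linarith
    then show ?thesis using \<sigma> by (simp add: field_simps)
  qed
  have "(\<lambda>k. (norm (U k - \<beta> k))\<^sup>2) \<longlonglongrightarrow> 0"
    by (rule tendsto_sandwich[OF _ _ tendsto_const upper_lim]) (use upper in auto)
  then have "(\<lambda>k. sqrt ((norm (U k - \<beta> k))\<^sup>2)) \<longlonglongrightarrow> sqrt 0" by (rule tendsto_real_sqrt)
  then have "(\<lambda>k. U k - \<beta> k) \<longlonglongrightarrow> 0" by (simp add: tendsto_norm_zero_iff)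
  from tendsto_add[OF this lim] show ?thesis by simp
qed

lemma segment_point_in_closed_segment:
  "t \<in> {0..1} \<Longrightarrow> x + t *\<^sub>R (y - x) \<in> closed_segment x (y :: 'a::real_vector)"
  by (auto simp: closed_segment_def algebra_simps intro!: exI[of _ t])

lemma norm_diff_le_in_closed_segment:
  "z \<in> closed_segment x y \<Longrightarrow> norm (z - x) \<le> norm (y - (x :: 'a::euclidean_space))"
  using dist_in_closed_segment[of z x y] by (simp add: dist_norm norm_minus_commute)

lemma card_supp_le_if_subset: "supp d \<subseteq> supp u \<Longrightarrow> card (supp u) \<le> s \<Longrightarrow> card (supp d) \<le> s"
  by (meson card_mono finite le_trans)

section \<open>An abstract smooth objective that is strongly convex on sparse directions\<close>

locale sparse_smooth_objective =
  fixes F :: "real^('p1::finite + 'p2::finite) \<Rightarrow> real"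
    and G :: "real^('p1 + 'p2) \<Rightarrow> real^('p1 + 'p2)"
    and H :: "real^('p1 + 'p2) \<Rightarrow> real^('p1 + 'p2) \<Rightarrow> real^('p1 + 'p2)"
    and s1 s2 :: nat and l Lam Lip :: real
  assumes F_has_derivative: "\<And>x. (F has_derivative (\<lambda>h. G x \<bullet> h)) (at x)"
    and G_has_derivative: "\<And>x. (G has_derivative H x) (at x)"
    and H_symmetric: "\<And>x d e. d \<bullet> H x e = e \<bullet> H x d"
    and H_sparse_lower: "\<And>x d. card (supp d) \<le> s1 + s2 \<Longrightarrow> d \<bullet> H x d \<ge> l * (norm d)\<^sup>2"
    and H_upper: "\<And>x d. norm (H x d) \<le> Lam * norm d"
    and H_lipschitz: "\<And>x y d. norm (H x d - H y d) \<le> Lip * norm (x - y) * norm d"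
    and l_pos: "l > 0"
begin

lemma H_bounded_linear: "bounded_linear (H x)"
  using G_has_derivative[of x] by (simp add: has_derivative_def)

lemma H_linear: "linear (H x)"
  using H_bounded_linear bounded_linear.linear by blast

lemma H_diff: "H x (a - b) = H x a - H x b"
  using H_linear linear_diff by blast

lemma Lam_nonneg: "Lam \<ge> 0"
proof -
  define d :: "real^('p1 + 'p2)" where "d = axis undefined 1"
  have "0 \<le> Lam * norm d" using H_upper[of 0 d] norm_ge_zero[of "H 0 d"] by linarith
  then show ?thesis by (simp add: d_def)
qed

lemma Lip_nonneg: "Lip \<ge> 0"
proof -
  define d :: "real^('p1 + 'p2)" where "d = axis undefined 1"
  have "0 \<le> Lip * norm (d - 0) * norm d"
    using H_lipschitz[where x=d and y=0 and d=d] norm_ge_zero[of "H d d - H 0 d"] by linarith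
  then show ?thesis by (simp add: d_def)
qed

lemma grad_F: "grad F = G"
proof
  fix x
  have "(F has_derivative (\<lambda>h. grad F x \<bullet> h)) (at x)"
    unfolding grad_def by (rule someI_ex) (use F_has_derivative in blast)
  then have "(\<lambda>h. grad F x \<bullet> h) = (\<lambda>h. G x \<bullet> h)"
    by (rule has_derivative_unique[OF _ F_has_derivative])
  then have "(grad F x - G x) \<bullet> (grad F x - G x) = 0"
    by (simp add: fun_eq_iff inner_diff_left)
  then show "grad F x = G x" by simp
qed

lemma hess_F: "hess F x = H x"
proof -
  have ex: "\<exists>H'. (G has_derivative H') (at x)" using G_has_derivative by blast
  have "(G has_derivative hess F x) (at x)"
    unfolding hess_def grad_F by (rule someI_ex[OF ex])
  then show ?thesis by (rule has_derivative_unique[OF _ G_has_derivative])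
qed

lemma G_lipschitz: "norm (G x - G y) \<le> Lam * norm (x - y)"
proof -
  have "onorm (H z) \<le> Lam" for z by (rule onorm_le) (rule H_upper)
  then show ?thesis
    by (intro differentiable_bound[where S=UNIV and f'=H])
       (simp_all add: has_derivative_at_withinI G_has_derivative)
qed

lemma F_quadratic_upper: "F y \<le> F x + G x \<bullet> (y - x) + Lam * (norm (y - x))\<^sup>2"
proof -
  have "onorm ((\<lambda>h. G z \<bullet> h) - (\<lambda>h. G x \<bullet> h)) \<le> Lam * norm (y - x)"
    if "z \<in> closed_segment x y" for z
  proof (rule onorm_le)
    fix h
    have "\<bar>(G z - G x) \<bullet> h\<bar> \<le> norm (G z - G x) * norm h" by (rule Cauchy_Schwarz_ineq2)
    also have "\<dots> \<le> (Lam * norm (y - x)) * norm h"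
    proof (rule mult_right_mono)
      have "Lam * norm (z - x) \<le> Lam * norm (y - x)"
        using norm_diff_le_in_closed_segment[OF that] Lam_nonneg by (rule mult_left_mono)
      then show "norm (G z - G x) \<le> Lam * norm (y - x)" using G_lipschitz[of z x] by linarith
    qed simp
    finally show "norm (((\<lambda>h. G z \<bullet> h) - (\<lambda>h. G x \<bullet> h)) h) \<le> Lam * norm (y - x) * norm h"
      by (simp add: inner_diff_left)
  qed
  then have "norm (F y - F x - G x \<bullet> (y - x)) \<le> norm (y - x) * (Lam * norm (y - x))"
    by (intro differentiable_bound_linearization[where S="closed_segment x y" and f'="\<lambda>z h. G z \<bullet> h"])
       (simp_all add: segment_point_in_closed_segment has_derivative_at_withinI F_has_derivative)
  then show ?thesis by (simp add: power2_eq_square algebra_simps abs_le_iff)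
qed

lemma G_linearization_error: "norm (G y - G x - H x (y - x)) \<le> Lip * (norm (y - x))\<^sup>2"
proof -
  have "onorm (H z - H x) \<le> Lip * norm (y - x)" if "z \<in> closed_segment x y" for z
  proof (rule onorm_le)
    fix h
    have "norm ((H z - H x) h) \<le> Lip * norm (z - x) * norm h"
      using H_lipschitz[where x=z and y=x and d=h] by simp
    also have "\<dots> \<le> Lip * norm (y - x) * norm h"
      using norm_diff_le_in_closed_segment[OF that] Lip_nonneg
      by (intro mult_right_mono mult_left_mono) auto
    finally show "norm ((H z - H x) h) \<le> Lip * norm (y - x) * norm h" .
  qed
  then have "norm (G y - G x - H x (y - x)) \<le> norm (y - x) * (Lip * norm (y - x))"
    by (intro differentiable_bound_linearization[where S="closed_segment x y" and f'=H])
       (simp_all add: segment_point_in_closed_segment has_derivative_at_withinI G_has_derivative)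
  then show ?thesis by (simp add: power2_eq_square algebra_simps)
qed

text \<open>Apply the linearization bound to \<open>F\<close> minus its quadratic model around \<open>u\<close>, whose
  derivative is the linearization error of \<open>G\<close>.\<close>
lemma F_cubic_upper:
  "F v \<le> F u + G u \<bullet> (v - u) + (1/2) * ((v - u) \<bullet> H u (v - u)) + Lip * (norm (v - u))^3"
proof -
  define \<psi> where "\<psi> w = F w - (1/2) * ((w - u) \<bullet> H u (w - u))" for w
  have H0: "H u 0 = 0" using H_linear linear_0 by blast
  have d\<psi>: "(\<psi> has_derivative (\<lambda>h. (G w - H u (w - u)) \<bullet> h)) (at w)" for w
  proof -
    have d1: "((\<lambda>w. w - u) has_derivative (\<lambda>h. h)) (at w)"
      by (intro derivative_eq_intros) auto
    have "((\<lambda>w. (w - u) \<bullet> H u (w - u)) has_derivative (\<lambda>h. (w - u) \<bullet> H u h + h \<bullet> H u (w - u))) (at w)"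
      using has_derivative_inner[OF d1 bounded_linear.has_derivative[OF H_bounded_linear d1]] .
    then have "(\<psi> has_derivative (\<lambda>h. G w \<bullet> h - (1/2) * ((w - u) \<bullet> H u h + h \<bullet> H u (w - u)))) (at w)"
      unfolding \<psi>_def by (intro has_derivative_diff F_has_derivative has_derivative_mult_right)
    moreover have "G w \<bullet> h - (1/2) * ((w - u) \<bullet> H u h + h \<bullet> H u (w - u)) = (G w - H u (w - u)) \<bullet> h"
      for h using H_symmetric[of "w - u" u h] by (simp add: inner_diff_left inner_diff_right inner_commute)
    ultimately show ?thesis by simp
  qed
  have "onorm ((\<lambda>h. (G z - H u (z - u)) \<bullet> h) - (\<lambda>h. (G u - H u (u - u)) \<bullet> h))
        \<le> Lip * (norm (v - u))\<^sup>2" if "z \<in> closed_segment u v" for z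
  proof (rule onorm_le)
    fix h
    have "\<bar>(G z - G u - H u (z - u)) \<bullet> h\<bar> \<le> norm (G z - G u - H u (z - u)) * norm h"
      by (rule Cauchy_Schwarz_ineq2)
    also have "\<dots> \<le> (Lip * (norm (v - u))\<^sup>2) * norm h"
    proof (rule mult_right_mono)
      have "(norm (z - u))\<^sup>2 \<le> (norm (v - u))\<^sup>2"
        using norm_diff_le_in_closed_segment[OF that] by (simp add: power_mono)
      then show "norm (G z - G u - H u (z - u)) \<le> Lip * (norm (v - u))\<^sup>2"
        using G_linearization_error[of z u] Lip_nonneg by (meson mult_left_mono order_trans)
    qed simp
    finally show "norm (((\<lambda>h. (G z - H u (z - u)) \<bullet> h) - (\<lambda>h. (G u - H u (u - u)) \<bullet> h)) h)
        \<le> Lip * (norm (v - u))\<^sup>2 * norm h"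
      using H0 by (simp add: inner_diff_left)
  qed
  then have "norm (\<psi> v - \<psi> u - (G u - H u (u - u)) \<bullet> (v - u)) \<le> norm (v - u) * (Lip * (norm (v - u))\<^sup>2)"
    by (intro differentiable_bound_linearization[where S="closed_segment u v"
          and f'="\<lambda>w h. (G w - H u (w - u)) \<bullet> h"])
       (simp_all add: segment_point_in_closed_segment has_derivative_at_withinI d\<psi>)
  then show ?thesis
    using H0 by (simp add: \<psi>_def power3_eq_cube power2_eq_square algebra_simps abs_le_iff)
qed

lemma armijo_condition_small_step:
  assumes b: "b \<in> Sigma_set s1 s2" and \<alpha>: "\<alpha> > 0"
    and u1: "blk1 u \<in> proj_sparse s1 (blk1 b - \<alpha> *\<^sub>R blk1 (G b))"
    and u2: "blk2 u \<in> proj_sparse s2 (blk2 b - \<alpha> *\<^sub>R blk2 (G b))"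
    and small: "\<alpha> * (2 * Lam + \<sigma>) \<le> 1"
  shows "F u \<le> F b - (\<sigma>/2) * (norm (u - b))\<^sup>2"
proof -
  have "blk1 (G b) \<bullet> (blk1 u - blk1 b) \<le> - ((norm (blk1 u - blk1 b))\<^sup>2 / (2 * \<alpha>))"
       "blk2 (G b) \<bullet> (blk2 u - blk2 b) \<le> - ((norm (blk2 u - blk2 b))\<^sup>2 / (2 * \<alpha>))"
    using proj_sparse_descent[OF u1 _ \<alpha>] proj_sparse_descent[OF u2 _ \<alpha>] b
    by (simp_all add: Sigma_set_def)
  then have "G b \<bullet> (u - b) \<le> - ((norm (u - b))\<^sup>2 / (2 * \<alpha>))"
    using inner_blocks[of "G b" "u - b"] norm_blocks_squared[of "u - b"] by (simp add: add_divide_distrib)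
  then have "F u \<le> F b - (1 / (2 * \<alpha>) - Lam) * (norm (u - b))\<^sup>2"
    using F_quadratic_upper[of u b] by (simp add: algebra_simps)
  moreover have "\<sigma>/2 \<le> 1 / (2 * \<alpha>) - Lam" using \<alpha> small by (simp add: field_simps)
  ultimately show ?thesis by (smt (verit) mult_right_mono zero_le_power2)
qed

definition newton_point :: "real^('p1 + 'p2) \<Rightarrow> real^('p1 + 'p2) \<Rightarrow> bool" where
  "newton_point u v \<longleftrightarrow> (\<forall>i\<in>supp u. H u (v - u) $ i = - (G u $ i)) \<and> (\<forall>i. i \<notin> supp u \<longrightarrow> v $ i = 0)"

lemma eq_0_if_H_nonpos:
  assumes "card (supp d) \<le> s1 + s2" "d \<bullet> H x d \<le> 0"
  shows "d = 0"
proof -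
  have "l * (norm d)\<^sup>2 \<le> 0" using H_sparse_lower[OF assms(1), of x] assms(2) by linarith
  then have "(norm d)\<^sup>2 \<le> 0" using l_pos by (simp add: mult_le_0_iff)
  then show ?thesis by simp
qed

lemma newton_point_exists:
  assumes c: "card (supp u) \<le> s1 + s2"
  shows "\<exists>v. newton_point u v"
proof -
  define P where "P d = (\<chi> i. if i \<in> supp u then d $ i else 0)" for d :: "real^('p1 + 'p2)"
  define \<Phi> where "\<Phi> d = (\<chi> i. if i \<in> supp u then H u (P d) $ i else d $ i)" for d
  have "linear P" unfolding P_def by (intro linearI) (simp_all add: vec_eq_iff)
  then have lin\<Phi>: "linear \<Phi>"
    unfolding \<Phi>_def using H_linear
    by (intro linearI) (simp_all add: vec_eq_iff linear_add linear_scale)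
  have "d = 0" if "\<Phi> d = 0" for d
  proof -
    have off: "\<forall>i. i \<notin> supp u \<longrightarrow> d $ i = 0"
      using that by (auto simp: \<Phi>_def vec_eq_iff split: if_splits)
    then have Pd: "P d = d" by (auto simp: P_def vec_eq_iff)
    have "\<forall>i\<in>supp u. H u d $ i = 0"
    proof
      fix i assume "i \<in> supp u"
      then show "H u d $ i = 0" using arg_cong[OF that, of "\<lambda>z. z $ i"] Pd by (simp add: \<Phi>_def)
    qed
    then have "d \<bullet> H u d = 0" using inner_supported[OF off, of "H u d"] by simp
    moreover have "supp d \<subseteq> supp u" using off by (auto simp: supp_def)
    ultimately show "d = 0" using eq_0_if_H_nonpos[of d u] card_supp_le_if_subset[OF _ c] by simp
  qed
  then have "inj \<Phi>" using lin\<Phi> by (simp add: linear_injective_0)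
  then have "surj \<Phi>" by (rule linear_injective_imp_surjective[OF lin\<Phi>]) simp
  then have "\<exists>e. (\<chi> i. if i \<in> supp u then - (G u $ i) else 0) = \<Phi> e" by (rule surjD)
  then obtain e where e: "\<Phi> e = (\<chi> i. if i \<in> supp u then - (G u $ i) else 0)" by metis
  have eoff: "e $ i = 0" if "i \<notin> supp u" for i
    using arg_cong[OF e, of "\<lambda>z. z $ i"] that by (simp add: \<Phi>_def)
  then have "P e = e" by (auto simp: P_def vec_eq_iff)
  then have "H u e $ i = - (G u $ i)" if "i \<in> supp u" for i
    using arg_cong[OF e, of "\<lambda>z. z $ i"] that by (simp add: \<Phi>_def)
  with eoff have "newton_point u (u + e)" by (auto simp: newton_point_def supp_def)
  then show ?thesis ..
qed

lemma newton_point_error: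
  assumes v: "newton_point u v" and c: "card (supp u) \<le> s1 + s2"
    and bs: "supp bs \<subseteq> supp u" and gs: "\<forall>i\<in>supp u. G bs $ i = 0"
  shows "l * norm (v - bs) \<le> Lip * (norm (u - bs))\<^sup>2"
proof -
  define e where "e = v - bs"
  define q where "q = G bs - G u - H u (bs - u)"
  have eoff: "\<forall>i. i \<notin> supp u \<longrightarrow> e $ i = 0" using v bs by (auto simp: newton_point_def e_def supp_def)
  have "H u e = H u (v - u) - H u (bs - u)" by (simp add: e_def H_diff[symmetric])
  then have "\<forall>i\<in>supp u. H u e $ i = q $ i" using v gs by (simp add: newton_point_def q_def)
  then have "e \<bullet> H u e = e \<bullet> q" using inner_supported[OF eoff] by simp
  also have "\<dots> \<le> norm e * norm q" by (rule norm_cauchy_schwarz)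
  also have "norm q \<le> Lip * (norm (u - bs))\<^sup>2"
    unfolding q_def using G_linearization_error[of bs u] by (simp add: norm_minus_commute)
  finally have A: "e \<bullet> H u e \<le> norm e * (Lip * (norm (u - bs))\<^sup>2)"
    by (simp add: mult_left_mono)
  have "supp e \<subseteq> supp u" using eoff by (auto simp: supp_def)
  then have "l * (norm e)\<^sup>2 \<le> e \<bullet> H u e" using H_sparse_lower card_supp_le_if_subset[OF _ c] by blast
  with A have "norm e * (l * norm e) \<le> norm e * (Lip * (norm (u - bs))\<^sup>2)"
    by (simp add: power2_eq_square algebra_simps)
  then show ?thesis
    using Lip_nonneg by (cases "e = 0") (simp_all add: e_def)
qed

lemma newton_point_decrease:
  assumes v: "newton_point u v" and c: "card (supp u) \<le> s1 + s2"
    and small: "Lip * norm (v - u) \<le> (l - \<sigma>) / 2"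
  shows "F v \<le> F u - (\<sigma>/2) * (norm (v - u))\<^sup>2"
proof -
  define d where "d = v - u"
  have doff: "\<forall>i. i \<notin> supp u \<longrightarrow> d $ i = 0" using v by (simp add: newton_point_def d_def supp_def)
  have "G u \<bullet> d = d \<bullet> G u" by (rule inner_commute)
  also have "\<dots> = (\<Sum>i\<in>supp u. d $ i * G u $ i)" by (rule inner_supported[OF doff])
  also have "\<dots> = - (d \<bullet> H u d)"
    using v inner_supported[OF doff, of "H u d"] by (simp add: newton_point_def d_def sum_negf)
  finally have gd: "G u \<bullet> d = - (d \<bullet> H u d)" .
  have "supp d \<subseteq> supp u" using doff by (auto simp: supp_def)
  then have low: "l * (norm d)\<^sup>2 \<le> d \<bullet> H u d" using H_sparse_lower card_supp_le_if_subset[OF _ c] by blast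
  have "Lip * (norm d)^3 = (Lip * norm d) * (norm d)\<^sup>2" by (simp add: power3_eq_cube power2_eq_square)
  also have "\<dots> \<le> ((l - \<sigma>) / 2) * (norm d)\<^sup>2" using small by (intro mult_right_mono) (simp_all add: d_def)
  finally have "F v \<le> F u - (1/2) * (d \<bullet> H u d) + ((l - \<sigma>) / 2) * (norm d)\<^sup>2"
    using F_cubic_upper[of v u] gd by (simp add: d_def)
  moreover have "((l - \<sigma>) / 2) * (norm d)\<^sup>2 = (l * (norm d)\<^sup>2) / 2 - (\<sigma>/2) * (norm d)\<^sup>2"
    by (simp add: field_simps)
  ultimately have "F v \<le> F u - (\<sigma>/2) * (norm d)\<^sup>2" using low by linarith
  then show ?thesis by (simp add: d_def)
qed

lemma newton_point_Sigma_set: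
  assumes "newton_point u v" "u \<in> Sigma_set s1 s2"
  shows "v \<in> Sigma_set s1 s2"
proof -
  have "\<forall>i. i \<notin> supp u \<longrightarrow> v $ i = 0" using assms(1) by (simp add: newton_point_def)
  then have "supp (blk1 v) \<subseteq> supp (blk1 u)" "supp (blk2 v) \<subseteq> supp (blk2 u)"
    by (auto simp: supp_def)
  then have "card (supp (blk1 v)) \<le> card (supp (blk1 u))" "card (supp (blk2 v)) \<le> card (supp (blk2 u))"
    by (simp_all add: card_mono)
  with assms(2) show ?thesis by (simp add: Sigma_set_def sparse_def)
qed

definition newton_accepted :: "real \<Rightarrow> real^('p1 + 'p2) \<Rightarrow> real^('p1 + 'p2) \<Rightarrow> bool" where
  "newton_accepted \<sigma> u v \<longleftrightarrow> newton_point u v \<and> F v \<le> F u - (\<sigma>/2) * (norm (v - u))\<^sup>2"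

definition switch_condition :: "real \<Rightarrow> real^('p1 + 'p2) \<Rightarrow> real^('p1 + 'p2) \<Rightarrow> bool" where
  "switch_condition \<epsilon> b u \<longleftrightarrow>
     (supp (blk1 b) = supp (blk1 u) \<and> supp (blk2 b) = supp (blk2 u)) \<or>
     (norm (blk1 (G u)) < \<epsilon> \<and> supp (blk2 b) = supp (blk2 u)) \<or>
     (norm (blk2 (G u)) < \<epsilon> \<and> supp (blk1 b) = supp (blk1 u)) \<or>
     (norm (blk1 (G u)) < \<epsilon> \<and> norm (blk2 (G u)) < \<epsilon>)"

text \<open>Backtracking stops no later than the first step size below \<open>1 / (2 Lam + \<sigma>)\<close>.\<close>
lemma backtracking_step_ge:
  assumes b: "b \<in> Sigma_set s1 s2" and \<sigma>: "\<sigma> > 0" and \<alpha>0: "0 < \<alpha>0" and \<gamma>: "0 < \<gamma>"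
    and proj: "\<forall>\<alpha>>0. blk1 (sel \<alpha>) \<in> proj_sparse s1 (blk1 b - \<alpha> *\<^sub>R blk1 (G b))
                    \<and> blk2 (sel \<alpha>) \<in> proj_sparse s2 (blk2 b - \<alpha> *\<^sub>R blk2 (G b))"
    and least: "\<And>q. q < qk \<Longrightarrow> \<not> F (sel (\<alpha>0 * \<gamma>^q)) \<le> F b - (\<sigma>/2) * (norm (sel (\<alpha>0 * \<gamma>^q) - b))\<^sup>2"
  shows "min \<alpha>0 (\<gamma> / (2 * Lam + \<sigma>)) \<le> \<alpha>0 * \<gamma>^qk"
proof (cases qk)
  case (Suc q)
  define \<alpha> where "\<alpha> = \<alpha>0 * \<gamma>^q"
  have "\<alpha> > 0" using \<alpha>0 \<gamma> by (simp add: \<alpha>_def)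
  have "\<not> \<alpha> * (2 * Lam + \<sigma>) \<le> 1"
  proof
    assume "\<alpha> * (2 * Lam + \<sigma>) \<le> 1"
    then have "F (sel \<alpha>) \<le> F b - (\<sigma>/2) * (norm (sel \<alpha> - b))\<^sup>2"
      using armijo_condition_small_step[OF b \<open>\<alpha> > 0\<close>] proj \<open>\<alpha> > 0\<close> by blast
    with least[of q] Suc show False by (simp add: \<alpha>_def)
  qed
  then have "\<gamma> * 1 < \<gamma> * (\<alpha> * (2 * Lam + \<sigma>))" using \<gamma> by (intro mult_strict_left_mono) simp_all
  then have "\<gamma> / (2 * Lam + \<sigma>) < \<gamma> * \<alpha>"
    using Lam_nonneg \<sigma> by (simp add: divide_less_eq mult.assoc)
  also have "\<gamma> * \<alpha> = \<alpha>0 * \<gamma>^qk" by (simp add: \<alpha>_def Suc)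
  finally show ?thesis by (simp add: min_le_iff_disj)
qed simp

lemma gpna_stepE:
  assumes step: "gpna_step F s1 s2 \<sigma> \<epsilon> \<alpha>0 \<gamma> b b'" and b: "b \<in> Sigma_set s1 s2"
    and \<sigma>: "\<sigma> > 0" and \<alpha>0: "0 < \<alpha>0" "\<alpha>0 \<le> 1" and \<gamma>: "0 < \<gamma>" "\<gamma> < 1"
  obtains \<alpha> u where "0 < \<alpha>" "\<alpha> \<le> 1" "min \<alpha>0 (\<gamma> / (2 * Lam + \<sigma>)) \<le> \<alpha>"
    and "blk1 u \<in> proj_sparse s1 (blk1 b - \<alpha> *\<^sub>R blk1 (G b))"
    and "blk2 u \<in> proj_sparse s2 (blk2 b - \<alpha> *\<^sub>R blk2 (G b))"
    and "F u \<le> F b - (\<sigma>/2) * (norm (u - b))\<^sup>2"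
    and "switch_condition \<epsilon> b u \<Longrightarrow> \<exists>v. newton_accepted \<sigma> u v \<Longrightarrow> newton_accepted \<sigma> u b'"
    and "\<not> (switch_condition \<epsilon> b u \<and> (\<exists>v. newton_accepted \<sigma> u v)) \<Longrightarrow> b' = u"
proof -
  define desc where "desc w \<longleftrightarrow> F w \<le> F b - (\<sigma>/2) * (norm (w - b))\<^sup>2" for w
  from step obtain sel :: "real \<Rightarrow> real^('p1 + 'p2)" where
    proj: "\<forall>\<alpha>>0. blk1 (sel \<alpha>) \<in> proj_sparse s1 (blk1 b - \<alpha> *\<^sub>R blk1 (G b))
                 \<and> blk2 (sel \<alpha>) \<in> proj_sparse s2 (blk2 b - \<alpha> *\<^sub>R blk2 (G b))"
    and exq: "\<exists>q. desc (sel (\<alpha>0 * \<gamma>^q))"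
    and rest: "let qk = (LEAST q. desc (sel (\<alpha>0 * \<gamma>^q))); u = sel (\<alpha>0 * \<gamma>^qk) in
       if switch_condition \<epsilon> b u \<and> (\<exists>v. newton_accepted \<sigma> u v) then newton_accepted \<sigma> u b' else b' = u"
    unfolding gpna_step_def grad_F hess_F desc_def[symmetric] Let_def switch_condition_def
      newton_accepted_def newton_point_def
    by blast
  define qk where "qk = (LEAST q. desc (sel (\<alpha>0 * \<gamma>^q)))"
  define \<alpha> where "\<alpha> = \<alpha>0 * \<gamma>^qk"
  have \<alpha>_bounds: "0 < \<alpha>" "\<alpha> \<le> 1"
    using \<alpha>0 \<gamma> by (simp_all add: \<alpha>_def power_le_one mult_le_one)
  have \<alpha>_ge: "min \<alpha>0 (\<gamma> / (2 * Lam + \<sigma>)) \<le> \<alpha>"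
    unfolding \<alpha>_def
  proof (rule backtracking_step_ge[OF b \<sigma> \<alpha>0(1) \<gamma>(1) proj])
    fix q assume "q < qk"
    then show "\<not> F (sel (\<alpha>0 * \<gamma>^q)) \<le> F b - (\<sigma>/2) * (norm (sel (\<alpha>0 * \<gamma>^q) - b))\<^sup>2"
      using not_less_Least[of q "\<lambda>q. desc (sel (\<alpha>0 * \<gamma>^q))"] by (simp add: qk_def desc_def)
  qed
  have decrease: "desc (sel \<alpha>)" unfolding \<alpha>_def qk_def by (rule LeastI_ex[OF exq])
  have branch: "if switch_condition \<epsilon> b (sel \<alpha>) \<and> (\<exists>v. newton_accepted \<sigma> (sel \<alpha>) v)
                 then newton_accepted \<sigma> (sel \<alpha>) b' else b' = sel \<alpha>"
    using rest by (simp add: Let_def \<alpha>_def qk_def)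
  have projected: "blk1 (sel \<alpha>) \<in> proj_sparse s1 (blk1 b - \<alpha> *\<^sub>R blk1 (G b))"
    "blk2 (sel \<alpha>) \<in> proj_sparse s2 (blk2 b - \<alpha> *\<^sub>R blk2 (G b))"
    using proj \<alpha>_bounds(1) by simp_all
  have accept: "newton_accepted \<sigma> (sel \<alpha>) b'"
    if "switch_condition \<epsilon> b (sel \<alpha>)" "\<exists>v. newton_accepted \<sigma> (sel \<alpha>) v"
    using branch by (simp only: if_P[OF conjI[OF that]])
  have reject: "b' = sel \<alpha>"
    if "\<not> (switch_condition \<epsilon> b (sel \<alpha>) \<and> (\<exists>v. newton_accepted \<sigma> (sel \<alpha>) v))"
    using branch by (simp only: if_not_P[OF that])
  show ?thesis
    by (rule that[OF \<alpha>_bounds \<alpha>_ge projected decrease[unfolded desc_def] accept reject])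
qed

lemma gpna_step_Sigma_set:
  assumes "gpna_step F s1 s2 \<sigma> \<epsilon> \<alpha>0 \<gamma> b b'" "b \<in> Sigma_set s1 s2"
    and "\<sigma> > 0" "0 < \<alpha>0" "\<alpha>0 \<le> 1" "0 < \<gamma>" "\<gamma> < 1"
  shows "b' \<in> Sigma_set s1 s2"
proof (rule gpna_stepE[OF assms])
  fix \<alpha> u
  assume "0 < \<alpha>" "\<alpha> \<le> 1" "min \<alpha>0 (\<gamma> / (2 * Lam + \<sigma>)) \<le> \<alpha>"
    and proj: "blk1 u \<in> proj_sparse s1 (blk1 b - \<alpha> *\<^sub>R blk1 (G b))"
      "blk2 u \<in> proj_sparse s2 (blk2 b - \<alpha> *\<^sub>R blk2 (G b))"
    and "F u \<le> F b - (\<sigma>/2) * (norm (u - b))\<^sup>2"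
    and acc: "switch_condition \<epsilon> b u \<Longrightarrow> \<exists>v. newton_accepted \<sigma> u v \<Longrightarrow> newton_accepted \<sigma> u b'"
    and rej: "\<not> (switch_condition \<epsilon> b u \<and> (\<exists>v. newton_accepted \<sigma> u v)) \<Longrightarrow> b' = u"
  from proj have u: "u \<in> Sigma_set s1 s2" by (simp add: Sigma_set_def proj_sparse_def)
  show ?thesis
  proof (cases "switch_condition \<epsilon> b u \<and> (\<exists>v. newton_accepted \<sigma> u v)")
    case True
    then have "newton_point u b'" using acc unfolding newton_accepted_def by blast
    then show ?thesis using newton_point_Sigma_set u by blast
  next
    case False
    then show ?thesis using rej u by simp
  qed
qed

end

lemma proj_blocks_nth:
  assumes "blk1 u \<in> proj_sparse s1 (blk1 b - \<alpha> *\<^sub>R blk1 g)"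
    and "blk2 u \<in> proj_sparse s2 (blk2 b - \<alpha> *\<^sub>R blk2 g)"
    and "i \<in> supp u"
  shows "u $ i = b $ i - \<alpha> * g $ i"
  using proj_sparse_nth[OF assms(1)] proj_sparse_nth[OF assms(2)] assms(3)
  by (cases i) (auto simp: supp_def)

context sparse_smooth_objective
begin

text \<open>On the support of \<open>u\<close> the projection does not change the gradient step, and there
  \<open>G bs\<close> vanishes, so \<open>u - bs\<close> is dominated entrywise by \<open>(b - bs) - \<alpha> (G b - G bs)\<close>.\<close>
lemma trial_point_error:
  assumes u1: "blk1 u \<in> proj_sparse s1 (blk1 b - \<alpha> *\<^sub>R blk1 (G b))"
    and u2: "blk2 u \<in> proj_sparse s2 (blk2 b - \<alpha> *\<^sub>R blk2 (G b))"
    and bs: "supp bs \<subseteq> supp u" and gs: "\<forall>i\<in>supp u. G bs $ i = 0"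
    and \<alpha>: "0 < \<alpha>" "\<alpha> \<le> 1"
  shows "norm (u - bs) \<le> (1 + Lam) * norm (b - bs)"
proof -
  have "\<bar>(u - bs) $ i\<bar> \<le> \<bar>((b - bs) - \<alpha> *\<^sub>R (G b - G bs)) $ i\<bar>" for i
  proof (cases "i \<in> supp u")
    case True
    then show ?thesis using proj_blocks_nth[OF u1 u2 True] gs by (simp add: algebra_simps)
  next
    case False
    moreover from False bs have "bs $ i = 0" by (auto simp: supp_def)
    ultimately show ?thesis by (simp add: supp_def)
  qed
  then have "norm (u - bs) \<le> norm ((b - bs) - \<alpha> *\<^sub>R (G b - G bs))"
    by (intro norm_le_componentwise_cart) simp
  also have "\<dots> \<le> norm (b - bs) + \<alpha> * norm (G b - G bs)"
    using \<alpha> norm_triangle_ineq4[of "b - bs" "\<alpha> *\<^sub>R (G b - G bs)"] by simp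
  also have "\<alpha> * norm (G b - G bs) \<le> 1 * (Lam * norm (b - bs))"
    using \<alpha> G_lipschitz[of b bs] by (intro mult_mono) simp_all
  finally show ?thesis by (simp add: algebra_simps)
qed

lemma newton_point_accepted_near_limit:
  assumes v: "newton_point u v" and c: "card (supp u) \<le> s1 + s2"
    and bs: "supp bs \<subseteq> supp u" and gs: "\<forall>i\<in>supp u. G bs $ i = 0"
    and close: "Lip * (Lip / l * (norm (u - bs))\<^sup>2 + norm (u - bs)) \<le> (l - \<sigma>) / 2"
  shows "newton_accepted \<sigma> u v"
proof -
  have "l * norm (v - bs) \<le> Lip * (norm (u - bs))\<^sup>2" by (rule newton_point_error[OF v c bs gs])
  then have "norm (v - bs) \<le> Lip / l * (norm (u - bs))\<^sup>2" using l_pos by (simp add: field_simps)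
  moreover have "norm (v - u) \<le> norm (v - bs) + norm (u - bs)"
    using norm_triangle_ineq4[of "v - bs" "u - bs"] by simp
  ultimately have "norm (v - u) \<le> Lip / l * (norm (u - bs))\<^sup>2 + norm (u - bs)" by linarith
  then have "Lip * norm (v - u) \<le> (l - \<sigma>) / 2"
    using close Lip_nonneg mult_left_mono by (metis order_trans)
  then show ?thesis using v newton_point_decrease[OF v c] by (simp add: newton_accepted_def)
qed

lemma newton_iterate_error:
  assumes v: "newton_point u v" and c: "card (supp u) \<le> s1 + s2"
    and bs: "supp bs \<subseteq> supp u" and gs: "\<forall>i\<in>supp u. G bs $ i = 0"
    and u: "norm (u - bs) \<le> (1 + Lam) * norm (b - bs)"
  shows "norm (v - bs) \<le> (1 + Lam)\<^sup>2 * Lip / l * (norm (b - bs))\<^sup>2"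
proof -
  have "(norm (u - bs))\<^sup>2 \<le> ((1 + Lam) * norm (b - bs))\<^sup>2" using u by (simp add: power_mono)
  then have "l * norm (v - bs) \<le> Lip * ((1 + Lam) * norm (b - bs))\<^sup>2"
    using newton_point_error[OF v c bs gs] Lip_nonneg by (meson mult_left_mono order_trans)
  then have "l * norm (v - bs) \<le> l * ((1 + Lam)\<^sup>2 * Lip / l * (norm (b - bs))\<^sup>2)"
    using l_pos by (simp add: power_mult_distrib mult_ac)
  then show ?thesis using l_pos by (rule mult_left_le_imp_le)
qed

lemma gpna_trial_points:
  assumes \<sigma>: "\<sigma> > 0" and params: "0 < \<alpha>0" "\<alpha>0 \<le> 1" "0 < \<gamma>" "\<gamma> < 1"
    and start: "\<beta> 0 \<in> Sigma_set s1 s2"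
    and iter: "\<And>k. gpna_step F s1 s2 \<sigma> \<epsilon> \<alpha>0 \<gamma> (\<beta> k) (\<beta> (Suc k))"
  obtains U A where "\<And>k. \<beta> k \<in> Sigma_set s1 s2"
    and "\<And>k. 0 < A k" "\<And>k. A k \<le> 1" "\<And>k. min \<alpha>0 (\<gamma> / (2 * Lam + \<sigma>)) \<le> A k"
    and "\<And>k. blk1 (U k) \<in> proj_sparse s1 (blk1 (\<beta> k) - A k *\<^sub>R blk1 (G (\<beta> k)))"
    and "\<And>k. blk2 (U k) \<in> proj_sparse s2 (blk2 (\<beta> k) - A k *\<^sub>R blk2 (G (\<beta> k)))"
    and "\<And>k. F (U k) \<le> F (\<beta> k) - (\<sigma>/2) * (norm (U k - \<beta> k))\<^sup>2"
    and "\<And>k. F (\<beta> (Suc k)) \<le> F (U k)"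
    and "\<And>k. switch_condition \<epsilon> (\<beta> k) (U k) \<Longrightarrow> \<exists>v. newton_accepted \<sigma> (U k) v
            \<Longrightarrow> newton_accepted \<sigma> (U k) (\<beta> (Suc k))"
proof -
  have sparse: "\<beta> k \<in> Sigma_set s1 s2" for k
    by (induction k) (use start gpna_step_Sigma_set[OF iter _ \<sigma> params] in auto)
  define trial where "trial k \<alpha> u \<longleftrightarrow> 0 < \<alpha> \<and> \<alpha> \<le> 1 \<and> min \<alpha>0 (\<gamma> / (2 * Lam + \<sigma>)) \<le> \<alpha>
    \<and> blk1 u \<in> proj_sparse s1 (blk1 (\<beta> k) - \<alpha> *\<^sub>R blk1 (G (\<beta> k)))
    \<and> blk2 u \<in> proj_sparse s2 (blk2 (\<beta> k) - \<alpha> *\<^sub>R blk2 (G (\<beta> k)))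
    \<and> F u \<le> F (\<beta> k) - (\<sigma>/2) * (norm (u - \<beta> k))\<^sup>2 \<and> F (\<beta> (Suc k)) \<le> F u
    \<and> (switch_condition \<epsilon> (\<beta> k) u \<longrightarrow> (\<exists>v. newton_accepted \<sigma> u v)
         \<longrightarrow> newton_accepted \<sigma> u (\<beta> (Suc k)))" for k \<alpha> u
  have "\<exists>\<alpha> u. trial k \<alpha> u" for k
  proof (rule gpna_stepE[OF iter sparse \<sigma> params])
    fix \<alpha> u
    assume "0 < \<alpha>" "\<alpha> \<le> 1" "min \<alpha>0 (\<gamma> / (2 * Lam + \<sigma>)) \<le> \<alpha>"
      and "blk1 u \<in> proj_sparse s1 (blk1 (\<beta> k) - \<alpha> *\<^sub>R blk1 (G (\<beta> k)))"
        "blk2 u \<in> proj_sparse s2 (blk2 (\<beta> k) - \<alpha> *\<^sub>R blk2 (G (\<beta> k)))"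
      and "F u \<le> F (\<beta> k) - (\<sigma>/2) * (norm (u - \<beta> k))\<^sup>2"
      and acc: "switch_condition \<epsilon> (\<beta> k) u \<Longrightarrow> \<exists>v. newton_accepted \<sigma> u v
                  \<Longrightarrow> newton_accepted \<sigma> u (\<beta> (Suc k))"
      and rej: "\<not> (switch_condition \<epsilon> (\<beta> k) u \<and> (\<exists>v. newton_accepted \<sigma> u v)) \<Longrightarrow> \<beta> (Suc k) = u"
    moreover have "F (\<beta> (Suc k)) \<le> F u"
    proof (cases "switch_condition \<epsilon> (\<beta> k) u \<and> (\<exists>v. newton_accepted \<sigma> u v)")
      case True
      then have "F (\<beta> (Suc k)) \<le> F u - (\<sigma>/2) * (norm (\<beta> (Suc k) - u))\<^sup>2"
        using acc[OF conjunct1[OF True] conjunct2[OF True]] by (simp add: newton_accepted_def)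
      moreover have "0 \<le> (\<sigma>/2) * (norm (\<beta> (Suc k) - u))\<^sup>2" using \<sigma> by simp
      ultimately show ?thesis by linarith
    next
      case False
      then show ?thesis using rej by simp
    qed
    ultimately have "trial k \<alpha> u" unfolding trial_def by blast
    then show ?thesis by blast
  qed
  then obtain A U where "\<And>k. trial k (A k) (U k)" by metis
  then show ?thesis
    using sparse by (intro that[of A U]) (simp_all add: trial_def)
qed

lemma eventually_stationary_trial_points:
  assumes proj1: "\<And>k. blk1 (U k) \<in> proj_sparse s1 (blk1 (\<beta> k) - A k *\<^sub>R blk1 (G (\<beta> k)))"
    and proj2: "\<And>k. blk2 (U k) \<in> proj_sparse s2 (blk2 (\<beta> k) - A k *\<^sub>R blk2 (G (\<beta> k)))"
    and sparse: "\<And>k. \<beta> k \<in> Sigma_set s1 s2"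
    and amin: "amin > 0" "\<And>k. amin \<le> A k"
    and \<beta>_lim: "\<beta> \<longlonglongrightarrow> bs" and U_lim: "U \<longlonglongrightarrow> bs" and \<epsilon>: "\<epsilon> > 0"
  shows "\<forall>\<^sub>F k in sequentially. card (supp (U k)) \<le> s1 + s2 \<and> supp bs \<subseteq> supp (U k)
           \<and> (\<forall>i\<in>supp (U k). G bs $ i = 0) \<and> switch_condition \<epsilon> (\<beta> k) (U k)"
proof -
  have contG: "isCont G x" for x by (rule has_derivative_continuous[OF G_has_derivative])
  have G\<beta>: "(\<lambda>k. G (\<beta> k)) \<longlonglongrightarrow> G bs" by (rule isCont_tendsto_compose[OF contG \<beta>_lim])
  have GU: "(\<lambda>k. G (U k)) \<longlonglongrightarrow> G bs" by (rule isCont_tendsto_compose[OF contG U_lim])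
  have sparse1: "blk1 (\<beta> k) \<in> sparse s1" and sparse2: "blk2 (\<beta> k) \<in> sparse s2" for k
    using sparse[of k] by (simp_all add: Sigma_set_def)
  note B1 = block_eventually_stationary[OF proj1 sparse1 tendsto_blk1[OF \<beta>_lim] tendsto_blk1[OF U_lim]
      tendsto_blk1[OF G\<beta>] amin tendsto_blk1[OF GU] \<epsilon>]
  note B2 = block_eventually_stationary[OF proj2 sparse2 tendsto_blk2[OF \<beta>_lim] tendsto_blk2[OF U_lim]
      tendsto_blk2[OF G\<beta>] amin tendsto_blk2[OF GU] \<epsilon>]
  show ?thesis
    using B1 B2
  proof eventually_elim
    case (elim k)
    have "card (supp (U k)) \<le> s1 + s2"
      using proj1[of k] proj2[of k] card_supp_blocks[of "U k"] by (simp add: proj_sparse_def sparse_def)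
    moreover have "supp bs \<subseteq> supp (U k)" using elim by (intro supp_subset_blocks) simp_all
    moreover have "\<forall>i\<in>supp (U k). G bs $ i = 0" using elim by (intro zero_on_supp_blocks) simp_all
    moreover have "switch_condition \<epsilon> (\<beta> k) (U k)" using elim unfolding switch_condition_def by blast
    ultimately show ?case by blast
  qed
qed

theorem gpna_local_quadratic_convergence:
  assumes \<sigma>: "0 < \<sigma>" "2 * \<sigma> < l"
    and params: "\<epsilon> > 0" "0 < \<alpha>0" "\<alpha>0 \<le> 1" "0 < \<gamma>" "\<gamma> < 1"
    and start: "\<beta> 0 \<in> Sigma_set s1 s2"
    and iter: "\<And>k. gpna_step F s1 s2 \<sigma> \<epsilon> \<alpha>0 \<gamma> (\<beta> k) (\<beta> (Suc k))"
    and lim: "\<beta> \<longlonglongrightarrow> bs"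
  shows "\<forall>\<^sub>F k in sequentially. norm (\<beta> (Suc k) - bs) \<le> (1 + Lam)\<^sup>2 * Lip / l * (norm (\<beta> k - bs))\<^sup>2"
proof (rule gpna_trial_points[OF \<sigma>(1) params(2-5) start iter])
  fix U A
  assume sparse: "\<And>k. \<beta> k \<in> Sigma_set s1 s2"
    and A: "\<And>k. 0 < A k" "\<And>k. A k \<le> 1" "\<And>k. min \<alpha>0 (\<gamma> / (2 * Lam + \<sigma>)) \<le> A k"
    and proj1: "\<And>k. blk1 (U k) \<in> proj_sparse s1 (blk1 (\<beta> k) - A k *\<^sub>R blk1 (G (\<beta> k)))"
    and proj2: "\<And>k. blk2 (U k) \<in> proj_sparse s2 (blk2 (\<beta> k) - A k *\<^sub>R blk2 (G (\<beta> k)))"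
    and decrease: "\<And>k. F (U k) \<le> F (\<beta> k) - (\<sigma>/2) * (norm (U k - \<beta> k))\<^sup>2"
    and next_le: "\<And>k. F (\<beta> (Suc k)) \<le> F (U k)"
    and accept: "\<And>k. switch_condition \<epsilon> (\<beta> k) (U k) \<Longrightarrow> \<exists>v. newton_accepted \<sigma> (U k) v
                   \<Longrightarrow> newton_accepted \<sigma> (U k) (\<beta> (Suc k))"
  have amin: "min \<alpha>0 (\<gamma> / (2 * Lam + \<sigma>)) > 0" using params Lam_nonneg \<sigma> by simp
  have U_lim: "U \<longlonglongrightarrow> bs"
    using has_derivative_continuous[OF F_has_derivative] \<sigma>(1) lim decrease next_le
    by (rule tendsto_trial_points)
  then have "(\<lambda>k. U k - bs) \<longlonglongrightarrow> 0" by (simp add: LIM_zero_iff)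
  then have U_lim_norm: "(\<lambda>k. norm (U k - bs)) \<longlonglongrightarrow> 0" by (simp add: tendsto_norm_zero_iff)
  have "(\<lambda>k. Lip * (Lip / l * (norm (U k - bs))\<^sup>2 + norm (U k - bs))) \<longlonglongrightarrow> Lip * (Lip / l * 0\<^sup>2 + 0)"
    by (intro tendsto_intros U_lim_norm)
  then have close: "\<forall>\<^sub>F k in sequentially. Lip * (Lip / l * (norm (U k - bs))\<^sup>2 + norm (U k - bs)) < (l - \<sigma>) / 2"
    using \<sigma> by (intro order_tendstoD(2)) auto
  show ?thesis
    using eventually_stationary_trial_points[OF proj1 proj2 sparse amin A(3) lim U_lim params(1)] close
  proof eventually_elim
    case (elim k)
    then have c: "card (supp (U k)) \<le> s1 + s2" and bs: "supp bs \<subseteq> supp (U k)"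
      and gs: "\<forall>i\<in>supp (U k). G bs $ i = 0" and sw: "switch_condition \<epsilon> (\<beta> k) (U k)" by simp_all
    obtain v where "newton_point (U k) v" using newton_point_exists[OF c] ..
    then have "newton_accepted \<sigma> (U k) v"
      using newton_point_accepted_near_limit[OF _ c bs gs] elim by simp
    then have "newton_point (U k) (\<beta> (Suc k))" using accept[OF sw] newton_accepted_def by blast
    moreover have "norm (U k - bs) \<le> (1 + Lam) * norm (\<beta> k - bs)"
      by (rule trial_point_error[OF proj1 proj2 bs gs A(1,2)])
    ultimately show ?case by (rule newton_iterate_error[OF _ c bs gs])
  qed
qed

end

section \<open>Derivatives of the co-regularised objective\<close>

definition logistic :: "real \<Rightarrow> real" where "logistic t = exp t / (1 + exp t)"
definition dlogistic :: "real \<Rightarrow> real" where "dlogistic t = exp t / (1 + exp t)^2"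

definition link :: "loss \<Rightarrow> real \<Rightarrow> real" where
  "link L t = (case L of Lin \<Rightarrow> t | Log \<Rightarrow> logistic t)"
definition dlink :: "loss \<Rightarrow> real \<Rightarrow> real" where
  "dlink L t = (case L of Lin \<Rightarrow> 1 | Log \<Rightarrow> dlogistic t)"
definition sample_loss :: "loss \<Rightarrow> real \<Rightarrow> real \<Rightarrow> real" where
  "sample_loss L yi t = (case L of Lin \<Rightarrow> (1/2) * (yi - t)^2 | Log \<Rightarrow> ln (1 + exp t) - yi * t)"

lemma logistic_has_real_derivative: "(logistic has_real_derivative dlogistic t) (at t)"
proof -
  have p: "1 + exp t > 0" by (simp add: add_pos_pos)
  have d: "DERIV (\<lambda>t. exp t / (1 + exp t)) t :> (exp t * (1 + exp t) - exp t * exp t) / ((1 + exp t)^Suc (Suc 0))"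
    by (rule DERIV_quotient) (use p in \<open>auto intro!: derivative_eq_intros\<close>)
  have "(exp t * (1 + exp t) - exp t * exp t) / ((1 + exp t)^Suc (Suc 0)) = dlogistic t"
    by (simp add: dlogistic_def power2_eq_square ring_distribs)
  with d show ?thesis unfolding logistic_def by simp
qed

lemma link_has_real_derivative: "(link L has_real_derivative dlink L t) (at t)"
proof (cases L)
  case Lin
  have "link Lin = (\<lambda>t. t)" by (simp add: fun_eq_iff link_def)
  then show ?thesis using Lin by (simp add: dlink_def)
next
  case Log
  have "link Log = logistic" by (simp add: fun_eq_iff link_def)
  then show ?thesis using Log by (simp add: dlink_def logistic_has_real_derivative)
qed

lemma sample_loss_has_real_derivative: "(sample_loss L yi has_real_derivative (link L t - yi)) (at t)"
proof (cases L)
  case Lin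
  show ?thesis unfolding Lin sample_loss_def link_def
    by ((rule derivative_eq_intros refl | simp add: algebra_simps)+, (simp add: field_simps)?)
next
  case Log
  have p: "1 + exp t > 0" by (simp add: add_pos_pos)
  have di: "DERIV (\<lambda>t. 1 + exp t) t :> exp t" by (auto intro!: derivative_eq_intros)
  have d1: "DERIV (\<lambda>t. ln (1 + exp t)) t :> inverse (1 + exp t) * exp t"
    by (rule DERIV_chain2[OF DERIV_ln[OF p] di])
  have d2: "DERIV (\<lambda>t. yi * t) t :> yi" by (auto intro!: derivative_eq_intros)
  have d: "DERIV (\<lambda>t. ln (1 + exp t) - yi * t) t :> inverse (1 + exp t) * exp t - yi"
    by (rule DERIV_diff[OF d1 d2])
  have f: "(\<lambda>t. ln (1 + exp t) - yi * t) = sample_loss L yi" using Log by (simp add: fun_eq_iff sample_loss_def)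
  have "inverse (1 + exp t) * exp t - yi = link L t - yi" using Log by (simp add: link_def logistic_def field_simps)
  then show ?thesis using d f by simp
qed

lemma lossf_eq_sum: "lossf L bt X y = (\<Sum>i\<in>UNIV. sample_loss L (y $ i) ((X $ i) \<bullet> bt))"
  by (cases L) (simp_all add: lossf_def loss_lin_def loss_log_def sample_loss_def sum_distrib_left)

lemma matrix_vector_mult_nth_inner: "(X *v v) $ i = (X $ i) \<bullet> v"
  by (simp add: matrix_vector_mult_def inner_vec_def mult.commute)

lemma inner_transpose_mult_left: "(transpose X *v w) \<bullet> h = w \<bullet> (X *v (h::real^'p::finite))"
  by (simp add: transpose_matrix_vector dot_lmul_matrix)

lemma inner_transpose_mult_right: "h \<bullet> (transpose X *v w) = (X *v (h::real^'p::finite)) \<bullet> w"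
  using inner_transpose_mult_left[of X w h] by (simp add: inner_commute)

definition link_vec :: "loss \<Rightarrow> real^'n \<Rightarrow> real^'n::finite" where
  "link_vec L z = (\<chi> i. link L (z $ i))"

definition loss_grad :: "loss \<Rightarrow> real^'p^'n \<Rightarrow> real^'n \<Rightarrow> real^'p \<Rightarrow> real^'p::finite" where
  "loss_grad L X y bt = transpose X *v (link_vec L (X *v bt) - y)"

lemma lossf_has_derivative:
  fixes X :: "real^'p::finite^'n::finite"
  shows "((\<lambda>bt. lossf L bt X y) has_derivative (\<lambda>h. loss_grad L X y bt \<bullet> h)) (at bt)"
proof -
  have d: "((\<lambda>bt. sample_loss L (y $ i) ((X $ i) \<bullet> bt)) has_derivative (\<lambda>h. (link L ((X $ i) \<bullet> bt) - y $ i) * ((X $ i) \<bullet> h))) (at bt)" for i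
  proof -
    have d1: "((\<lambda>bt. (X $ i) \<bullet> bt) has_derivative (\<lambda>h. (X $ i) \<bullet> h)) (at bt)"
      by (rule bounded_linear.has_derivative[OF bounded_linear_inner_right has_derivative_ident])
    have d2: "(sample_loss L (y $ i) has_derivative (*) (link L ((X $ i) \<bullet> bt) - y $ i)) (at ((X $ i) \<bullet> bt))"
      using sample_loss_has_real_derivative[of L "y $ i" "(X $ i) \<bullet> bt"] by (simp add: has_field_derivative_def)
    show ?thesis using has_derivative_compose[OF d1 d2] by simp
  qed
  have "((\<lambda>bt. \<Sum>i\<in>UNIV. sample_loss L (y $ i) ((X $ i) \<bullet> bt)) has_derivative
         (\<lambda>h. \<Sum>i\<in>UNIV. (link L ((X $ i) \<bullet> bt) - y $ i) * ((X $ i) \<bullet> h))) (at bt)"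
    by (rule has_derivative_sum) (rule d)
  moreover have "(\<lambda>h. \<Sum>i\<in>UNIV. (link L ((X $ i) \<bullet> bt) - y $ i) * ((X $ i) \<bullet> h)) = (\<lambda>h. loss_grad L X y bt \<bullet> h)"
  proof
    fix h
    show "(\<Sum>i\<in>UNIV. (link L ((X $ i) \<bullet> bt) - y $ i) * ((X $ i) \<bullet> h)) = loss_grad L X y bt \<bullet> h"
      unfolding loss_grad_def inner_transpose_mult_left by (simp add: inner_vec_def link_vec_def matrix_vector_mult_nth_inner)
  qed
  ultimately show ?thesis unfolding lossf_eq_sum by simp
qed

definition residual :: "real^'p1^'n \<Rightarrow> real^'p2^'n \<Rightarrow> real^('p1::finite + 'p2::finite) \<Rightarrow> real^'n::finite" where
  "residual X Z b = X *v blk1 b - Z *v blk2 b"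

lemma bounded_linear_residual: "bounded_linear (residual X Z)"
  unfolding residual_def
  by (intro bounded_linear_sub bounded_linear_compose[OF matrix_vector_mul_bounded_linear bounded_linear_blk1]
      bounded_linear_compose[OF matrix_vector_mul_bounded_linear bounded_linear_blk2])

definition obj_grad :: "loss \<Rightarrow> real^'p1^'n \<Rightarrow> real^'p2^'n \<Rightarrow> real^'n \<Rightarrow> real \<Rightarrow> real \<Rightarrow> real
     \<Rightarrow> real^('p1::finite + 'p2::finite) \<Rightarrow> real^('p1 + 'p2)" where
  "obj_grad L X Z y a b c bt = (1 / real CARD('n::finite)) *\<^sub>R
      join (a *\<^sub>R loss_grad L X y (blk1 bt) + c *\<^sub>R (transpose X *v residual X Z bt))
           (b *\<^sub>R loss_grad L Z y (blk2 bt) - c *\<^sub>R (transpose Z *v residual X Z bt))"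

lemma obj_has_derivative:
  fixes X :: "real^'p1::finite^'n::finite" and Z :: "real^'p2::finite^'n"
  shows "(obj L X Z y a b c has_derivative (\<lambda>h. obj_grad L X Z y a b c bt \<bullet> h)) (at bt)"
proof -
  have t1: "((\<lambda>bt. lossf L (blk1 bt) X y) has_derivative (\<lambda>h. loss_grad L X y (blk1 bt) \<bullet> blk1 h)) (at bt)"
    using has_derivative_compose[OF bounded_linear.has_derivative[OF bounded_linear_blk1 has_derivative_ident] lossf_has_derivative] .
  have t2: "((\<lambda>bt. lossf L (blk2 bt) Z y) has_derivative (\<lambda>h. loss_grad L Z y (blk2 bt) \<bullet> blk2 h)) (at bt)"
    using has_derivative_compose[OF bounded_linear.has_derivative[OF bounded_linear_blk2 has_derivative_ident] lossf_has_derivative] .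
  have dr: "(residual X Z has_derivative residual X Z) (at bt)"
    by (rule bounded_linear_imp_has_derivative[OF bounded_linear_residual])
  have t3: "((\<lambda>bt. residual X Z bt \<bullet> residual X Z bt) has_derivative (\<lambda>h. residual X Z bt \<bullet> residual X Z h + residual X Z h \<bullet> residual X Z bt)) (at bt)"
    by (rule has_derivative_inner[OF dr dr])
  have eq: "obj L X Z y a b c = (\<lambda>bt. (1 / real CARD('n)) * (a * lossf L (blk1 bt) X y + b * lossf L (blk2 bt) Z y
                 + (c/2) * (residual X Z bt \<bullet> residual X Z bt)))"
    by (simp add: fun_eq_iff obj_def residual_def power2_norm_eq_inner)
  have d: "(obj L X Z y a b c has_derivative (\<lambda>h. (1 / real CARD('n)) * (a * (loss_grad L X y (blk1 bt) \<bullet> blk1 h)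
              + b * (loss_grad L Z y (blk2 bt) \<bullet> blk2 h) + (c/2) * (residual X Z bt \<bullet> residual X Z h + residual X Z h \<bullet> residual X Z bt)))) (at bt)"
    unfolding eq by (intro has_derivative_mult_right has_derivative_add t1 t2 t3)
  show ?thesis
  proof (rule has_derivative_eq_rhs[OF d], rule ext)
    fix h
    have r: "residual X Z h = X *v blk1 h - Z *v blk2 h" by (simp add: residual_def)
    show "(1 / real CARD('n)) * (a * (loss_grad L X y (blk1 bt) \<bullet> blk1 h)
              + b * (loss_grad L Z y (blk2 bt) \<bullet> blk2 h) + (c/2) * (residual X Z bt \<bullet> residual X Z h + residual X Z h \<bullet> residual X Z bt))
          = obj_grad L X Z y a b c bt \<bullet> h"
      unfolding obj_grad_def inner_join inner_scaleR_left
      by (simp add: inner_add_left inner_diff_left inner_transpose_mult_left inner_transpose_mult_right r inner_diff_right inner_commute algebra_simps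
               del: transpose_matrix_vector)
  qed
qed

definition hadamard :: "real^'n \<Rightarrow> real^'n \<Rightarrow> real^'n::finite" where
  "hadamard D v = (\<chi> i. D $ i * v $ i)"

definition dlink_vec :: "loss \<Rightarrow> real^'p^'n \<Rightarrow> real^'p \<Rightarrow> real^'n::finite" where
  "dlink_vec L X bt = (\<chi> i. dlink L ((X *v bt) $ i))"

definition loss_hess :: "loss \<Rightarrow> real^'p^'n::finite \<Rightarrow> real^'p \<Rightarrow> real^'p \<Rightarrow> real^'p::finite" where
  "loss_hess L X bt v = transpose X *v hadamard (dlink_vec L X bt) (X *v v)"

lemma loss_grad_has_derivative:
  fixes X :: "real^'p::finite^'n::finite"
  shows "(loss_grad L X y has_derivative loss_hess L X bt) (at bt)"
proof -
  have dp: "((\<lambda>bt. link_vec L (X *v bt)) has_derivative (\<lambda>v. hadamard (dlink_vec L X bt) (X *v v))) (at bt)"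
  proof (rule has_derivative_vec_componentwise)
    fix i
    have d1: "((\<lambda>bt. (X $ i) \<bullet> bt) has_derivative (\<lambda>h. (X $ i) \<bullet> h)) (at bt)"
      by (rule bounded_linear.has_derivative[OF bounded_linear_inner_right has_derivative_ident])
    have d2: "(link L has_derivative (*) (dlink L ((X $ i) \<bullet> bt))) (at ((X $ i) \<bullet> bt))"
      using link_has_real_derivative[of L "(X $ i) \<bullet> bt"] by (simp add: has_field_derivative_def)
    show "((\<lambda>bt. link_vec L (X *v bt) $ i) has_derivative (\<lambda>v. hadamard (dlink_vec L X bt) (X *v v) $ i)) (at bt)"
      using has_derivative_compose[OF d1 d2] by (simp add: link_vec_def hadamard_def dlink_vec_def matrix_vector_mult_nth_inner)
  qed
  have "((\<lambda>bt. transpose X *v (link_vec L (X *v bt) - y)) has_derivative (\<lambda>v. transpose X *v (hadamard (dlink_vec L X bt) (X *v v) - 0))) (at bt)"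
    by (intro bounded_linear.has_derivative[OF matrix_vector_mul_bounded_linear] has_derivative_diff dp has_derivative_const)
  moreover have "loss_grad L X y = (\<lambda>bt. transpose X *v (link_vec L (X *v bt) - y))" by (simp add: loss_grad_def[abs_def])
  moreover have "loss_hess L X bt = (\<lambda>v. transpose X *v hadamard (dlink_vec L X bt) (X *v v))" by (simp add: loss_hess_def[abs_def])
  ultimately show ?thesis by simp
qed

definition obj_hess :: "loss \<Rightarrow> real^'p1^'n \<Rightarrow> real^'p2^'n \<Rightarrow> real \<Rightarrow> real \<Rightarrow> real
     \<Rightarrow> real^('p1::finite + 'p2::finite) \<Rightarrow> real^('p1 + 'p2) \<Rightarrow> real^('p1 + 'p2)" where
  "obj_hess L X Z a b c bt h = (1 / real CARD('n::finite)) *\<^sub>R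
      join (a *\<^sub>R loss_hess L X (blk1 bt) (blk1 h) + c *\<^sub>R (transpose X *v residual X Z h))
           (b *\<^sub>R loss_hess L Z (blk2 bt) (blk2 h) - c *\<^sub>R (transpose Z *v residual X Z h))"

lemma obj_grad_has_derivative:
  fixes X :: "real^'p1::finite^'n::finite" and Z :: "real^'p2::finite^'n"
  shows "(obj_grad L X Z y a b c has_derivative obj_hess L X Z a b c bt) (at bt)"
proof -
  have b1: "(blk1 has_derivative blk1) (at bt)" by (rule bounded_linear_imp_has_derivative[OF bounded_linear_blk1])
  have b2: "(blk2 has_derivative blk2) (at bt)" by (rule bounded_linear_imp_has_derivative[OF bounded_linear_blk2])
  have g1: "((\<lambda>bt. loss_grad L X y (blk1 bt)) has_derivative (\<lambda>h. loss_hess L X (blk1 bt) (blk1 h))) (at bt)"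
    using has_derivative_compose[OF b1 loss_grad_has_derivative] .
  have g2: "((\<lambda>bt. loss_grad L Z y (blk2 bt)) has_derivative (\<lambda>h. loss_hess L Z (blk2 bt) (blk2 h))) (at bt)"
    using has_derivative_compose[OF b2 loss_grad_has_derivative] .
  have dr: "(residual X Z has_derivative residual X Z) (at bt)" by (rule bounded_linear_imp_has_derivative[OF bounded_linear_residual])
  have m1: "((\<lambda>bt. transpose X *v residual X Z bt) has_derivative (\<lambda>h. transpose X *v residual X Z h)) (at bt)"
    by (rule bounded_linear.has_derivative[OF matrix_vector_mul_bounded_linear dr])
  have m2: "((\<lambda>bt. transpose Z *v residual X Z bt) has_derivative (\<lambda>h. transpose Z *v residual X Z h)) (at bt)"
    by (rule bounded_linear.has_derivative[OF matrix_vector_mul_bounded_linear dr])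
  have "((\<lambda>bt. (1 / real CARD('n)) *\<^sub>R join (a *\<^sub>R loss_grad L X y (blk1 bt) + c *\<^sub>R (transpose X *v residual X Z bt))
           (b *\<^sub>R loss_grad L Z y (blk2 bt) - c *\<^sub>R (transpose Z *v residual X Z bt))) has_derivative obj_hess L X Z a b c bt) (at bt)"
    unfolding obj_hess_def
    by (intro has_derivative_scaleR_right has_derivative_join has_derivative_add has_derivative_diff
        has_derivative_scaleR_right g1 g2 m1 m2)
  then show ?thesis by (simp add: obj_grad_def[abs_def] del: transpose_matrix_vector)
qed

section \<open>Curvature bounds for the Hessian\<close>

definition weighted_inner :: "real^'n \<Rightarrow> real^'n \<Rightarrow> real^'n::finite \<Rightarrow> real" where
  "weighted_inner D u v = (\<Sum>i\<in>UNIV. D $ i * u $ i * v $ i)"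

lemma inner_loss_hess: "d \<bullet> loss_hess L X bt e = weighted_inner (dlink_vec L X bt) (X *v d) (X *v e)"
  unfolding loss_hess_def inner_transpose_mult_right
  by (simp add: weighted_inner_def inner_vec_def hadamard_def algebra_simps del: transpose_matrix_vector)

lemma inner_obj_hess:
  fixes X :: "real^'p1::finite^'n::finite" and Z :: "real^'p2::finite^'n"
  shows "d \<bullet> obj_hess L X Z a b c bt e = (1 / real CARD('n)) *
     (a * weighted_inner (dlink_vec L X (blk1 bt)) (X *v blk1 d) (X *v blk1 e) + b * weighted_inner (dlink_vec L Z (blk2 bt)) (Z *v blk2 d) (Z *v blk2 e)
      + c * (residual X Z d \<bullet> residual X Z e))"
proof -
  have "d \<bullet> obj_hess L X Z a b c bt e = obj_hess L X Z a b c bt e \<bullet> d" by (rule inner_commute)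
  also have "\<dots> = (1 / real CARD('n)) *
     ((a * (loss_hess L X (blk1 bt) (blk1 e) \<bullet> blk1 d) + c * ((transpose X *v residual X Z e) \<bullet> blk1 d))
      + (b * (loss_hess L Z (blk2 bt) (blk2 e) \<bullet> blk2 d) - c * ((transpose Z *v residual X Z e) \<bullet> blk2 d)))"
    unfolding obj_hess_def by (simp only: inner_scaleR_left inner_join inner_add_left inner_diff_left)
  also have "loss_hess L X (blk1 bt) (blk1 e) \<bullet> blk1 d = weighted_inner (dlink_vec L X (blk1 bt)) (X *v blk1 d) (X *v blk1 e)"
    using inner_loss_hess[of "blk1 d" L X "blk1 bt" "blk1 e"] by (simp add: inner_commute)
  also have "loss_hess L Z (blk2 bt) (blk2 e) \<bullet> blk2 d = weighted_inner (dlink_vec L Z (blk2 bt)) (Z *v blk2 d) (Z *v blk2 e)"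
    using inner_loss_hess[of "blk2 d" L Z "blk2 bt" "blk2 e"] by (simp add: inner_commute)
  also have "(transpose X *v residual X Z e) \<bullet> blk1 d = residual X Z e \<bullet> (X *v blk1 d)" by (rule inner_transpose_mult_left)
  also have "(transpose Z *v residual X Z e) \<bullet> blk2 d = residual X Z e \<bullet> (Z *v blk2 d)" by (rule inner_transpose_mult_left)
  finally have calc: "d \<bullet> obj_hess L X Z a b c bt e = (1 / real CARD('n)) *
     ((a * weighted_inner (dlink_vec L X (blk1 bt)) (X *v blk1 d) (X *v blk1 e) + c * (residual X Z e \<bullet> (X *v blk1 d)))
      + (b * weighted_inner (dlink_vec L Z (blk2 bt)) (Z *v blk2 d) (Z *v blk2 e) - c * (residual X Z e \<bullet> (Z *v blk2 d))))" .
  have "residual X Z e \<bullet> (X *v blk1 d) - residual X Z e \<bullet> (Z *v blk2 d) = residual X Z d \<bullet> residual X Z e"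
    by (simp add: residual_def[of X Z d] inner_diff_right inner_commute)
  then have "c * (residual X Z e \<bullet> (X *v blk1 d)) - c * (residual X Z e \<bullet> (Z *v blk2 d)) = c * (residual X Z d \<bullet> residual X Z e)"
    by (simp add: right_diff_distrib[symmetric])
  then show ?thesis unfolding calc by (simp add: algebra_simps)
qed

lemma weighted_inner_commute: "weighted_inner D u v = weighted_inner D v u"
  by (simp add: weighted_inner_def mult_ac)

lemma obj_hess_symmetric: "d \<bullet> obj_hess L X Z a b c bt e = e \<bullet> obj_hess L X Z a b c bt d"
  unfolding inner_obj_hess by (simp add: weighted_inner_commute inner_commute)

lemma weighted_inner_one: "(\<forall>i. D $ i = 1) \<Longrightarrow> weighted_inner D u u = (norm u)^2"
  by (simp add: weighted_inner_def power2_norm_eq_inner inner_vec_def)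

lemma weighted_inner_bounds:
  assumes "\<forall>i. 0 \<le> D $ i \<and> D $ i \<le> k"
  shows "0 \<le> weighted_inner D u u" "weighted_inner D u u \<le> k * (norm u)^2"
proof -
  show "0 \<le> weighted_inner D u u" unfolding weighted_inner_def using assms by (intro sum_nonneg) (simp add: mult.assoc)
  have "weighted_inner D u u \<le> (\<Sum>i\<in>UNIV. k * (u $ i * u $ i))"
    unfolding weighted_inner_def using assms by (intro sum_mono) (simp add: mult.assoc mult_right_mono)
  also have "\<dots> = k * (norm u)^2" by (simp add: sum_distrib_left power2_norm_eq_inner inner_vec_def)
  finally show "weighted_inner D u u \<le> k * (norm u)^2" .
qed

lemma one_plus_exp_neq_0 [simp]: "1 + exp t \<noteq> (0::real)"
  using exp_gt_zero[of t] by linarith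

lemma dlogistic_pos: "0 < dlogistic t"
proof -
  have "(1 + exp t)^2 > 0" by (simp add: add_pos_pos)
  then show ?thesis unfolding dlogistic_def by (intro divide_pos_pos) simp_all
qed
lemma dlogistic_le: "dlogistic t \<le> 1/4"
proof -
  have "4 * exp t \<le> (1 + exp t)^2" using zero_le_square[of "exp t - 1"]
    by (simp add: power2_eq_square algebra_simps)
  moreover have "(1 + exp t)^2 > 0" by (simp add: add_pos_pos)
  ultimately show ?thesis unfolding dlogistic_def by (simp add: divide_le_eq)
qed

lemma dlink_vec_bounds:
  "\<forall>i. 0 \<le> dlink_vec L X bt $ i \<and> dlink_vec L X bt $ i \<le> (case L of Lin \<Rightarrow> 1 | Log \<Rightarrow> 1/4)"
proof
  fix i
  show "0 \<le> dlink_vec L X bt $ i \<and> dlink_vec L X bt $ i \<le> (case L of Lin \<Rightarrow> 1 | Log \<Rightarrow> 1/4)"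
    using dlogistic_pos[of "(X *v bt) $ i"] dlogistic_le[of "(X *v bt) $ i"]
    by (cases L) (simp_all add: dlink_vec_def dlink_def)
qed

lemma blockmat_mult_vec:
  "blockmat A B C D *v v = join (A *v blk1 v + B *v blk2 v) (C *v blk1 v + D *v blk2 v)"
proof -
  have "(blockmat A B C D *v v) $ k = join (A *v blk1 v + B *v blk2 v) (C *v blk1 v + D *v blk2 v) $ k" for k
    by (cases k) (simp_all add: blockmat_def join_def matrix_vector_mult_def sum_UNIV_Plus)
  then show ?thesis by (simp add: vec_eq_iff)
qed

lemma inner_gram_mult: "x \<bullet> ((transpose X ** Y) *v z) = (X *v x) \<bullet> (Y *v (z::real^'q::finite))"
  for X :: "real^'p::finite^'n::finite"
  by (simp add: matrix_vector_mul_assoc[symmetric] inner_transpose_mult_right del: transpose_matrix_vector)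

lemma blockmat_quadratic_form:
  "v \<bullet> (blockmat A B C D *v v) = blk1 v \<bullet> (A *v blk1 v) + blk1 v \<bullet> (B *v blk2 v) + blk2 v \<bullet> (C *v blk1 v) + blk2 v \<bullet> (D *v blk2 v)"
  unfolding blockmat_mult_vec using inner_join[of _ _ v] by (simp add: inner_commute inner_add_left inner_add_right)

lemma norm_residual_squared: "(norm (residual X Z v))^2 = (norm (X *v blk1 v))^2 - 2 * ((X *v blk1 v) \<bullet> (Z *v blk2 v)) + (norm (Z *v blk2 v))^2"
  unfolding residual_def power2_norm_eq_inner by (simp add: inner_diff_left inner_diff_right inner_commute)

definition curv_weight :: "loss \<Rightarrow> real \<Rightarrow> real" where "curv_weight L a = (case L of Lin \<Rightarrow> a | Log \<Rightarrow> a/4)"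

lemma Qmat_quadratic_form:
  fixes X :: "real^'p1::finite^'n::finite" and Z :: "real^'p2::finite^'n"
  shows "v \<bullet> (Qmat L X Z a b c *v v) = (1 / real CARD('n)) *
     (curv_weight L a * (norm (X *v blk1 v))^2 + curv_weight L b * (norm (Z *v blk2 v))^2 + c * (norm (residual X Z v))^2)"
proof -
  have "v \<bullet> (Qmat L X Z a b c *v v) = (1 / real CARD('n)) *
      ((curv_weight L a + c) * ((X *v blk1 v) \<bullet> (X *v blk1 v)) + (- c) * ((X *v blk1 v) \<bullet> (Z *v blk2 v))
       + (- c) * ((Z *v blk2 v) \<bullet> (X *v blk1 v)) + (curv_weight L b + c) * ((Z *v blk2 v) \<bullet> (Z *v blk2 v)))"
    unfolding Qmat_def Let_def scaleR_matrix_vector_assoc[symmetric] inner_scaleR_right blockmat_quadratic_form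
    by (cases L) (simp_all add: curv_weight_def inner_gram_mult del: transpose_matrix_vector)
  then show ?thesis unfolding norm_residual_squared by (simp add: power2_norm_eq_inner inner_commute algebra_simps)
qed

lemma lmat_Log_quadratic_form:
  fixes X :: "real^'p1::finite^'n::finite" and Z :: "real^'p2::finite^'n"
  shows "v \<bullet> (lmat Log X Z a b c *v v) = (c / real CARD('n)) * (norm (residual X Z v))^2"
proof -
  have "v \<bullet> (lmat Log X Z a b c *v v) = (c / real CARD('n)) *
      (((X *v blk1 v) \<bullet> (X *v blk1 v)) - ((X *v blk1 v) \<bullet> (Z *v blk2 v))
       - ((Z *v blk2 v) \<bullet> (X *v blk1 v)) + ((Z *v blk2 v) \<bullet> (Z *v blk2 v)))"
    by (simp add: lmat_def scaleR_matrix_vector_assoc[symmetric] blockmat_quadratic_form inner_gram_mult uminus_matrix_vector_mult inner_minus_right del: transpose_matrix_vector)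
  then show ?thesis unfolding norm_residual_squared by (simp add: power2_norm_eq_inner inner_commute algebra_simps)
qed

lemma transpose_blockmat:
  "transpose (blockmat A B C D) = blockmat (transpose A) (transpose C) (transpose B) (transpose D)"
  by (simp add: transpose_def blockmat_def vec_eq_iff split: sum.split)

lemma symmetric_Qmat: "symmetric_matrix (Qmat L X Z a b c)"
  unfolding symmetric_matrix_def Qmat_def Let_def
  by (simp add: transpose_scalar transpose_blockmat matrix_transpose_mul transpose_uminus)

lemma symmetric_lmat: "symmetric_matrix (lmat L X Z a b c)"
proof (cases L)
  case Lin then show ?thesis using symmetric_Qmat by (simp add: lmat_def)
next
  case Log then show ?thesis unfolding symmetric_matrix_def lmat_def
    by (simp add: transpose_scalar transpose_blockmat matrix_transpose_mul transpose_uminus)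
qed

lemma obj_hess_quadratic_bounds:
  fixes X :: "real^'p1::finite^'n::finite" and Z :: "real^'p2::finite^'n"
  assumes abc: "a > 0" "b > 0" "c > 0"
  shows "d \<bullet> (lmat L X Z a b c *v d) \<le> d \<bullet> obj_hess L X Z a b c bt d"
    and "d \<bullet> obj_hess L X Z a b c bt d \<le> d \<bullet> (Qmat L X Z a b c *v d)"
    and "0 \<le> d \<bullet> obj_hess L X Z a b c bt d"
proof -
  define u1 where "u1 = X *v blk1 d"
  define u2 where "u2 = Z *v blk2 d"
  define W1 where "W1 = weighted_inner (dlink_vec L X (blk1 bt)) u1 u1"
  define W2 where "W2 = weighted_inner (dlink_vec L Z (blk2 bt)) u2 u2"
  define R where "R = (norm (residual X Z d))^2"
  have H: "d \<bullet> obj_hess L X Z a b c bt d = (1 / real CARD('n)) * (a * W1 + b * W2 + c * R)"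
    unfolding inner_obj_hess W1_def W2_def R_def u1_def u2_def by (simp add: power2_norm_eq_inner)
  have Q: "d \<bullet> (Qmat L X Z a b c *v d) = (1 / real CARD('n)) * (curv_weight L a * (norm u1)^2 + curv_weight L b * (norm u2)^2 + c * R)"
    unfolding Qmat_quadratic_form u1_def u2_def R_def ..
  have kk: "\<forall>i. 0 \<le> dlink_vec L X (blk1 bt) $ i \<and> dlink_vec L X (blk1 bt) $ i \<le> (case L of Lin \<Rightarrow> 1 | Log \<Rightarrow> 1/4)"
           "\<forall>i. 0 \<le> dlink_vec L Z (blk2 bt) $ i \<and> dlink_vec L Z (blk2 bt) $ i \<le> (case L of Lin \<Rightarrow> 1 | Log \<Rightarrow> 1/4)"
    by (rule dlink_vec_bounds)+
  have W1b: "0 \<le> W1" "W1 \<le> (case L of Lin \<Rightarrow> 1 | Log \<Rightarrow> 1/4) * (norm u1)^2"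
    unfolding W1_def using weighted_inner_bounds[OF kk(1)] by auto
  have W2b: "0 \<le> W2" "W2 \<le> (case L of Lin \<Rightarrow> 1 | Log \<Rightarrow> 1/4) * (norm u2)^2"
    unfolding W2_def using weighted_inner_bounds[OF kk(2)] by auto
  have R0: "R \<ge> 0" by (simp add: R_def)
  have n0: "1 / real CARD('n) > 0" by simp
  have aW1: "a * W1 \<le> curv_weight L a * (norm u1)^2"
    using mult_left_mono[OF W1b(2), of a] abc by (cases L) (simp_all add: curv_weight_def)
  have bW2: "b * W2 \<le> curv_weight L b * (norm u2)^2"
    using mult_left_mono[OF W2b(2), of b] abc by (cases L) (simp_all add: curv_weight_def)
  show "d \<bullet> obj_hess L X Z a b c bt d \<le> d \<bullet> (Qmat L X Z a b c *v d)"
    unfolding H Q using aW1 bW2 n0 by (intro mult_left_mono) simp_all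
  have pos: "0 \<le> a * W1 + b * W2 + c * R" using W1b W2b R0 abc by simp
  show "0 \<le> d \<bullet> obj_hess L X Z a b c bt d" unfolding H using pos n0 by simp
  show "d \<bullet> (lmat L X Z a b c *v d) \<le> d \<bullet> obj_hess L X Z a b c bt d"
  proof (cases L)
    case Log
    have "d \<bullet> (lmat L X Z a b c *v d) = (1 / real CARD('n)) * (c * R)"
      using Log lmat_Log_quadratic_form[of d X Z a b c] by (simp add: R_def)
    also have "\<dots> \<le> (1 / real CARD('n)) * (a * W1 + b * W2 + c * R)"
      using W1b W2b abc n0 by (intro mult_left_mono) simp_all
    finally show ?thesis unfolding H .
  next
    case Lin
    have "W1 = (norm u1)^2" unfolding W1_def using Lin by (intro weighted_inner_one) (simp add: dlink_vec_def dlink_def)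
    moreover have "W2 = (norm u2)^2" unfolding W2_def using Lin by (intro weighted_inner_one) (simp add: dlink_vec_def dlink_def)
    ultimately have "d \<bullet> obj_hess L X Z a b c bt d = d \<bullet> (Qmat L X Z a b c *v d)"
      unfolding H Q using Lin by (simp add: curv_weight_def)
    then show ?thesis using Lin by (simp add: lmat_def)
  qed
qed

lemma lf_le_quadratic_form:
  assumes c: "card (supp d) \<le> s"
  shows "lf L X Z a b c s * (norm d)^2 \<le> d \<bullet> (lmat L X Z a b c *v d)"
proof (cases "d = 0")
  case True then show ?thesis by simp
next
  case False
  define M where "M = lmat L X Z a b c"
  define T where "T = supp d"
  have T: "T \<noteq> {}" using False by (auto simp: T_def supp_def vec_eq_iff)
  have dT: "\<forall>i. i \<notin> T \<longrightarrow> d $ i = 0" by (simp add: T_def supp_def)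
  have r: "d \<bullet> (M *v d) \<ge> lam_min_sub M T * (norm d)^2"
    by (rule lam_min_sub_le_quadratic_form[OF _ T dT]) (simp add: M_def symmetric_lmat)
  have eqset: "{lam_min_sub M T | T. T \<noteq> {} \<and> card T \<le> s} = (\<lambda>T. lam_min_sub M T) ` {T. T \<noteq> {} \<and> card T \<le> s}"
    by auto
  have "lf L X Z a b c s = Min ((\<lambda>T. lam_min_sub M T) ` {T. T \<noteq> {} \<and> card T \<le> s})"
    unfolding lf_def M_def[symmetric] eqset ..
  also have "\<dots> \<le> lam_min_sub M T"
    by (rule Min_le) (use T c in \<open>auto simp: T_def\<close>)
  finally have "lf L X Z a b c s * (norm d)^2 \<le> lam_min_sub M T * (norm d)^2" by (simp add: mult_right_mono)
  with r show ?thesis by (simp add: M_def)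
qed

lemma quadratic_form_le_Lf: "d \<bullet> (Qmat L X Z a b c *v d) \<le> Lf L X Z a b c * (norm d)^2"
  unfolding Lf_def by (rule quadratic_form_le_lam_max[OF symmetric_Qmat])

lemma discriminant_le:
  fixes A B C :: real
  assumes "\<And>t. 0 \<le> A - 2 * t * B + t^2 * C" "C \<ge> 0"
  shows "B^2 \<le> A * C"
proof (cases "C = 0")
  case False
  then have Cp: "C > 0" using assms(2) by simp
  have "0 \<le> A - 2 * (B / C) * B + (B / C)^2 * C" by (rule assms(1))
  also have "\<dots> = A - B^2 / C" using Cp by (simp add: power2_eq_square field_simps)
  finally have "B^2 / C \<le> A" by simp
  then show ?thesis using Cp by (simp add: divide_le_eq mult.commute)
next
  case True
  show ?thesis
  proof (cases "B = 0")
    case True then show ?thesis using \<open>C = 0\<close> by simp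
  next
    case False
    have "0 \<le> A - 2 * ((A + 1) / (2 * B)) * B + ((A + 1) / (2 * B))^2 * C" by (rule assms(1))
    also have "\<dots> = -1" using False \<open>C = 0\<close> by (simp add: field_simps)
    finally show ?thesis by simp
  qed
qed

lemma psd_form_cauchy_schwarz:
  fixes H :: "real^'m::finite \<Rightarrow> real^'m"
  assumes lin: "linear H" and sym: "\<And>d e. d \<bullet> H e = e \<bullet> H d" and psd: "\<And>d. 0 \<le> d \<bullet> H d"
  shows "(e \<bullet> H d)\<^sup>2 \<le> (d \<bullet> H d) * (e \<bullet> H e)"
proof (rule discriminant_le)
  show "0 \<le> d \<bullet> H d - 2 * t * (e \<bullet> H d) + t\<^sup>2 * (e \<bullet> H e)" for t
  proof -
    have H_diff: "H (d - t *\<^sub>R e) = H d - t *\<^sub>R H e" using lin by (simp add: linear_diff linear_scale)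
    have "(d - t *\<^sub>R e) \<bullet> H (d - t *\<^sub>R e) = d \<bullet> H d - 2 * t * (e \<bullet> H d) + t\<^sup>2 * (e \<bullet> H e)"
      unfolding H_diff using sym[of d e]
      by (simp add: inner_diff_left inner_diff_right power2_eq_square algebra_simps)
    with psd[of "d - t *\<^sub>R e"] show ?thesis by simp
  qed
qed (rule psd)

lemma norm_le_if_quadratic_form_le:
  fixes H :: "real^'m::finite \<Rightarrow> real^'m"
  assumes lin: "linear H" and sym: "\<And>d e. d \<bullet> H e = e \<bullet> H d"
    and psd: "\<And>d. 0 \<le> d \<bullet> H d" and up: "\<And>d. d \<bullet> H d \<le> Lam * (norm d)\<^sup>2"
  shows "norm (H d) \<le> Lam * norm d"
proof -
  have Lam_d: "0 \<le> Lam * norm d"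
  proof (cases "d = 0")
    case False
    have "0 \<le> Lam * norm d * norm d"
      using psd[of d] up[of d] by (simp add: power2_eq_square mult.assoc)
    then show ?thesis using False by (simp add: zero_le_mult_iff)
  qed simp
  show ?thesis
  proof (cases "H d = 0")
    case False
    have "(norm (H d))\<^sup>2 * (norm (H d))\<^sup>2 = (H d \<bullet> H d)\<^sup>2"
      unfolding power2_norm_eq_inner by (simp add: power2_eq_square)
    also have "\<dots> \<le> (d \<bullet> H d) * (H d \<bullet> H (H d))" by (rule psd_form_cauchy_schwarz[OF lin sym psd])
    also have "\<dots> \<le> (Lam * (norm d)\<^sup>2) * (Lam * (norm (H d))\<^sup>2)"
    proof -
      have "0 \<le> Lam * (norm d)\<^sup>2" using psd[of d] up[of d] by linarith
      then show ?thesis by (rule mult_mono[OF up[of d] up[of "H d"] _ psd[of "H d"]])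
    qed
    also have "\<dots> = (Lam * norm d)\<^sup>2 * (norm (H d))\<^sup>2" by (simp add: power_mult_distrib power2_eq_square mult_ac)
    finally have "(norm (H d))\<^sup>2 * (norm (H d))\<^sup>2 \<le> (Lam * norm d)\<^sup>2 * (norm (H d))\<^sup>2" .
    moreover have "(norm (H d))\<^sup>2 > 0" using False by simp
    ultimately have "(norm (H d))\<^sup>2 \<le> (Lam * norm d)\<^sup>2" by (rule mult_right_le_imp_le)
    then show ?thesis using Lam_d by (rule power2_le_imp_le)
  qed (simp add: Lam_d)
qed

section \<open>Lipschitz continuity of the logistic Hessian\<close>

lemma logistic_bounds: "0 < logistic t" "logistic t < 1"
proof -
  have p: "0 < 1 + exp t" using exp_gt_zero[of t] by linarith
  show "0 < logistic t" unfolding logistic_def using p by simp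
  show "logistic t < 1" unfolding logistic_def using p by (simp add: divide_less_eq)
qed

lemma dlogistic_eq: "dlogistic = (\<lambda>t. logistic t - logistic t * logistic t)"
proof
  fix t :: real
  define E where "E = exp t"
  have h: "1 + E \<noteq> 0" using exp_gt_zero[of t] unfolding E_def by linarith
  have a1: "1 - E/(1+E) = 1/(1+E)" using h by (simp add: field_simps)
  have "E/(1+E) - E/(1+E)*(E/(1+E)) = E/(1+E) * (1 - E/(1+E))" by (simp add: algebra_simps)
  also have "\<dots> = E/(1+E) * (1/(1+E))" by (simp add: a1)
  also have "\<dots> = E/(1+E)^2" by (simp add: power2_eq_square)
  finally show "dlogistic t = logistic t - logistic t * logistic t" unfolding dlogistic_def logistic_def E_def by simp
qed

lemma dlogistic_lipschitz: "\<bar>dlogistic s - dlogistic t\<bar> \<le> \<bar>s - t\<bar>"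
proof -
  define D where "D t = dlogistic t - (dlogistic t * logistic t + logistic t * dlogistic t)" for t
  have der: "DERIV dlogistic x :> D x" for x
  proof -
    have "DERIV (\<lambda>t. logistic t - logistic t * logistic t) x :> D x"
      unfolding D_def using DERIV_diff[OF logistic_has_real_derivative[of x] DERIV_mult[OF logistic_has_real_derivative[of x] logistic_has_real_derivative[of x]]] by simp
    then show ?thesis by (simp only: dlogistic_eq[symmetric])
  qed
  have Db: "\<bar>D x\<bar> \<le> 1" for x
  proof -
    have "D x = dlogistic x * (1 - 2 * logistic x)" by (simp add: D_def algebra_simps)
    moreover have "\<bar>1 - 2 * logistic x\<bar> \<le> 1" using logistic_bounds[of x] by linarith
    moreover have "0 \<le> dlogistic x" "dlogistic x \<le> 1" using dlogistic_pos[of x] dlogistic_le[of x] by linarith+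
    ultimately show ?thesis by (simp add: abs_mult) (metis abs_of_nonneg mult_le_one abs_ge_zero)
  qed
  have main: "\<bar>dlogistic b - dlogistic a\<bar> \<le> b - a" if ab: "a < b" for a b
  proof -
    obtain z where "dlogistic b - dlogistic a = (b - a) * D z" using MVT2[OF ab der] by blast
    then have "\<bar>dlogistic b - dlogistic a\<bar> = (b - a) * \<bar>D z\<bar>" using ab by (simp add: abs_mult)
    also have "\<dots> \<le> (b - a) * 1" using Db[of z] ab by (intro mult_left_mono) simp_all
    finally show ?thesis by simp
  qed
  show ?thesis
  proof (cases s t rule: linorder_cases)
    case less then show ?thesis using main[OF less] by (simp add: abs_minus_commute)
  next
    case equal then show ?thesis by simp
  next
    case greater then show ?thesis using main[OF greater] by simp
  qed
qed

lemma norm_gram_hadamard_le: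
  fixes X :: "real^'p::finite^'n::finite"
  assumes E: "\<And>i. \<bar>E $ i\<bar> \<le> m"
  shows "norm (transpose X *v hadamard E (X *v w)) \<le> m * lam_max (transpose X ** X) * norm w"
proof -
  define lam where "lam = lam_max (transpose X ** X)"
  have Xb: "(norm (X *v v))^2 \<le> lam * (norm v)^2" for v
  proof -
    have "(norm (X *v v))^2 = v \<bullet> ((transpose X ** X) *v v)" by (simp add: inner_gram_mult power2_norm_eq_inner del: transpose_matrix_vector)
    also have "\<dots> \<le> lam * (norm v)^2" unfolding lam_def by (rule quadratic_form_le_lam_max[OF symmetric_matrix_gram])
    finally show ?thesis .
  qed
  have lam0: "lam \<ge> 0"
  proof -
    have "0 \<le> (norm (X *v axis undefined 1))^2" by simp
    also have "\<dots> \<le> lam * (norm (axis undefined (1::real) :: real^'p))^2" by (rule Xb)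
    finally show ?thesis by simp
  qed
  have m0: "m \<ge> 0" using E[of undefined] by linarith
  have Xn: "norm (X *v v) \<le> sqrt lam * norm v" for v
  proof (rule power2_le_imp_le)
    show "(norm (X *v v))^2 \<le> (sqrt lam * norm v)^2" using Xb[of v] lam0 by (simp add: power_mult_distrib)
    show "0 \<le> sqrt lam * norm v" using lam0 by simp
  qed
  have dm: "norm (hadamard E u) \<le> m * norm u" for u :: "real^'n"
  proof -
    have "\<bar>hadamard E u $ i\<bar> \<le> \<bar>(m *\<^sub>R u) $ i\<bar>" for i
      using E[of i] m0 by (simp add: hadamard_def abs_mult mult_right_mono)
    then have "norm (hadamard E u) \<le> norm (m *\<^sub>R u)" by (intro norm_le_componentwise_cart) simp
    then show ?thesis using m0 by simp
  qed
  define z where "z = transpose X *v hadamard E (X *v w)"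
  have "(norm z)^2 = (X *v z) \<bullet> hadamard E (X *v w)"
    unfolding power2_norm_eq_inner by (simp add: z_def[symmetric] inner_transpose_mult_right[of z X, symmetric] del: transpose_matrix_vector)
  also have "\<dots> \<le> norm (X *v z) * norm (hadamard E (X *v w))" by (rule norm_cauchy_schwarz)
  also have "\<dots> \<le> (sqrt lam * norm z) * (m * (sqrt lam * norm w))"
    using Xn[of z] Xn[of w] dm[of "X *v w"] m0 lam0
    by (intro mult_mono) (auto intro: order_trans mult_left_mono)
  also have "\<dots> = (m * lam * norm w) * norm z" using lam0 by (simp add: algebra_simps)
  finally have sq: "norm z * norm z \<le> (m * lam * norm w) * norm z" by (simp add: power2_eq_square)
  show ?thesis
  proof (cases "z = 0")
    case True then show ?thesis using m0 lam0 by (simp add: z_def lam_def)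
  next
    case False then have "norm z > 0" by simp
    with sq have "norm z \<le> m * lam * norm w" by (simp add: mult_le_cancel_right)
    then show ?thesis by (simp add: z_def lam_def)
  qed
qed

lemma obj_hess_Lin_const: "obj_hess Lin X Z a b c x d = obj_hess Lin X Z a b c y d"
  by (simp add: obj_hess_def loss_hess_def dlink_vec_def dlink_def)

lemma abs_inner_le_l1norm: "\<bar>x \<bullet> v\<bar> \<le> l1norm x * norm (v::real^'m::finite)"
proof -
  have "\<bar>x \<bullet> v\<bar> \<le> (\<Sum>j\<in>UNIV. \<bar>x $ j * v $ j\<bar>)" unfolding inner_vec_def inner_real_def by (rule sum_abs)
  also have "\<dots> \<le> (\<Sum>j\<in>UNIV. \<bar>x $ j\<bar> * norm v)"
    by (intro sum_mono) (simp add: abs_mult mult_left_mono component_le_norm_cart)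
  also have "\<dots> = l1norm x * norm v" by (simp add: l1norm_def sum_distrib_right)
  finally show ?thesis .
qed

lemma l1norm_le_Max: "l1norm (X $ i) \<le> Max (range (\<lambda>i. l1norm ((X::real^'m::finite^'n::finite) $ i)))"
  by (rule Max_ge) auto

lemma lam_max_gram_nonneg: "lam_max (transpose X ** (X::real^'p::finite^'n::finite)) \<ge> 0"
proof -
  have "0 \<le> (norm (X *v axis undefined 1))^2" by simp
  also have "\<dots> = axis undefined 1 \<bullet> ((transpose X ** X) *v axis undefined (1::real))"
    by (simp add: inner_gram_mult power2_norm_eq_inner del: transpose_matrix_vector)
  also have "\<dots> \<le> lam_max (transpose X ** X) * (norm (axis undefined (1::real) :: real^'p))^2"
    by (rule quadratic_form_le_lam_max[OF symmetric_matrix_gram])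
  finally show ?thesis by simp
qed

lemma l1norm_nonneg: "0 \<le> l1norm v" by (simp add: l1norm_def sum_nonneg)

lemma loss_hess_Log_diff_bound:
  fixes X :: "real^'p::finite^'n::finite"
  shows "norm (loss_hess Log X x w - loss_hess Log X x' w) \<le>
     (Max (range (\<lambda>i. l1norm (X $ i))) * norm (x - x')) * lam_max (transpose X ** X) * norm w"
proof -
  define E where "E = dlink_vec Log X x - dlink_vec Log X x'"
  have eq: "loss_hess Log X x w - loss_hess Log X x' w = transpose X *v hadamard E (X *v w)"
  proof -
    have dd: "hadamard (dlink_vec Log X x) (X *v w) - hadamard (dlink_vec Log X x') (X *v w) = hadamard E (X *v w)"
      by (simp add: E_def hadamard_def vec_eq_iff left_diff_distrib)
    show ?thesis unfolding loss_hess_def dd[symmetric] by (simp only: matrix_vector_mult_diff_distrib)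
  qed
  have Eb: "\<bar>E $ i\<bar> \<le> Max (range (\<lambda>i. l1norm (X $ i))) * norm (x - x')" for i
  proof -
    have "\<bar>E $ i\<bar> = \<bar>dlogistic ((X $ i) \<bullet> x) - dlogistic ((X $ i) \<bullet> x')\<bar>"
      by (simp add: E_def dlink_vec_def dlink_def matrix_vector_mult_nth_inner)
    also have "\<dots> \<le> \<bar>(X $ i) \<bullet> x - (X $ i) \<bullet> x'\<bar>" by (rule dlogistic_lipschitz)
    also have "\<dots> = \<bar>(X $ i) \<bullet> (x - x')\<bar>" by (simp add: inner_diff_right)
    also have "\<dots> \<le> l1norm (X $ i) * norm (x - x')" by (rule abs_inner_le_l1norm)
    also have "\<dots> \<le> Max (range (\<lambda>i. l1norm (X $ i))) * norm (x - x')"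
      by (intro mult_right_mono l1norm_le_Max) simp
    finally show ?thesis .
  qed
  show ?thesis unfolding eq by (rule norm_gram_hadamard_le[OF Eb])
qed

text \<open>The sum of the two block constants is at most twice their maximum, and \<open>2 \<le> 3 \<surd>2 / 2\<close>.\<close>
lemma block_constants_le_Cf:
  fixes X :: "real^'p1::finite^'n::finite" and Z :: "real^'p2::finite^'n"
  assumes ab: "a > 0" "b > 0"
  shows "(a * Max (range (\<lambda>i. l1norm (X $ i))) * lam_max (transpose X ** X)
          + b * Max (range (\<lambda>i. l1norm (Z $ i))) * lam_max (transpose Z ** Z)) / real CARD('n)
         \<le> Cf X Z a b / 2"
proof -
  define A where "A = a * Max (range (\<lambda>i. l1norm (X $ i))) * lam_max (transpose X ** X)"
  define B where "B = b * Max (range (\<lambda>i. l1norm (Z $ i))) * lam_max (transpose Z ** Z)"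
  have "0 \<le> Max (range (\<lambda>i. l1norm (X $ i)))" "0 \<le> Max (range (\<lambda>i. l1norm (Z $ i)))"
    using l1norm_le_Max[of X undefined] l1norm_le_Max[of Z undefined]
      l1norm_nonneg[of "X $ undefined"] l1norm_nonneg[of "Z $ undefined"] by linarith+
  then have max_nonneg: "0 \<le> max A B"
    using ab lam_max_gram_nonneg[of X] by (simp add: A_def le_max_iff_disj)
  have "(4/3)\<^sup>2 \<le> (sqrt 2)\<^sup>2" by (simp add: power2_eq_square)
  then have sqrt2: "4/3 \<le> sqrt (2::real)" by (rule power2_le_imp_le) simp
  have "A + B \<le> 2 * max A B" by simp
  also have "\<dots> \<le> (3 * sqrt 2 / 2) * max A B"
    by (rule mult_right_mono) (use sqrt2 max_nonneg in linarith)+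
  finally have "A + B \<le> (3 * sqrt 2 / 2) * max A B" .
  then have "(A + B) / real CARD('n) \<le> ((3 * sqrt 2 / 2) * max A B) / real CARD('n)"
    by (rule divide_right_mono) simp
  also have "\<dots> = Cf X Z a b / 2" by (simp add: Cf_def A_def B_def)
  finally show ?thesis by (simp add: A_def B_def)
qed

lemma obj_hess_Log_lipschitz:
  fixes X :: "real^'p1::finite^'n::finite" and Z :: "real^'p2::finite^'n"
  assumes ab: "a > 0" "b > 0"
  shows "norm (obj_hess Log X Z a b c x d - obj_hess Log X Z a b c y d) \<le> Cf X Z a b / 2 * norm (x - y) * norm d"
proof -
  define M1 where "M1 = Max (range (\<lambda>i. l1norm (X $ i)))"
  define M2 where "M2 = Max (range (\<lambda>i. l1norm (Z $ i)))"
  define l1 where "l1 = lam_max (transpose X ** X)"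
  define l2 where "l2 = lam_max (transpose Z ** Z)"
  define T1 where "T1 = loss_hess Log X (blk1 x) (blk1 d) - loss_hess Log X (blk1 y) (blk1 d)"
  define T2 where "T2 = loss_hess Log Z (blk2 x) (blk2 d) - loss_hess Log Z (blk2 y) (blk2 d)"
  have M: "M1 \<ge> 0" "M2 \<ge> 0" unfolding M1_def M2_def
    using l1norm_le_Max[of X undefined] l1norm_le_Max[of Z undefined]
      l1norm_nonneg[of "X $ undefined"] l1norm_nonneg[of "Z $ undefined"] by linarith+
  have l: "l1 \<ge> 0" "l2 \<ge> 0" unfolding l1_def l2_def by (rule lam_max_gram_nonneg)+
  have "norm T1 \<le> (M1 * norm (blk1 x - blk1 y)) * l1 * norm (blk1 d)"
    unfolding T1_def M1_def l1_def by (rule loss_hess_Log_diff_bound)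
  also have "\<dots> \<le> M1 * l1 * (norm (x - y) * norm d)"
    using norm_blk1_le[of "x - y"] norm_blk1_le[of d] M l
    by (simp add: mult_ac mult_mono mult_left_mono)
  finally have T1: "norm T1 \<le> M1 * l1 * (norm (x - y) * norm d)" .
  have "norm T2 \<le> (M2 * norm (blk2 x - blk2 y)) * l2 * norm (blk2 d)"
    unfolding T2_def M2_def l2_def by (rule loss_hess_Log_diff_bound)
  also have "\<dots> \<le> M2 * l2 * (norm (x - y) * norm d)"
    using norm_blk2_le[of "x - y"] norm_blk2_le[of d] M l
    by (simp add: mult_ac mult_mono mult_left_mono)
  finally have T2: "norm T2 \<le> M2 * l2 * (norm (x - y) * norm d)" .
  have "obj_hess Log X Z a b c x d - obj_hess Log X Z a b c y d
        = (1 / real CARD('n)) *\<^sub>R join (a *\<^sub>R T1) (b *\<^sub>R T2)"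
    unfolding obj_hess_def T1_def T2_def scaleR_diff_right[symmetric] join_diff
    by (simp add: scaleR_diff_right algebra_simps)
  then have "norm (obj_hess Log X Z a b c x d - obj_hess Log X Z a b c y d)
        \<le> (a * norm T1 + b * norm T2) / real CARD('n)"
    using norm_join_le[of "a *\<^sub>R T1" "b *\<^sub>R T2"] ab by (simp add: divide_right_mono)
  also have "\<dots> \<le> ((a * M1 * l1 + b * M2 * l2) / real CARD('n)) * (norm (x - y) * norm d)"
    using T1 T2 ab by (simp add: divide_right_mono add_mono algebra_simps)
  also have "\<dots> \<le> Cf X Z a b / 2 * (norm (x - y) * norm d)"
    using block_constants_le_Cf[OF ab, of X Z] by (intro mult_right_mono) (simp_all add: M1_def M2_def l1_def l2_def)
  finally show ?thesis by (simp add: mult.assoc)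
qed

section \<open>Local quadratic convergence of GPNA\<close>

text \<open>For the least-squares loss the Hessian is constant, so its Lipschitz constant is \<open>0\<close>
  and the quadratic error estimate becomes finite termination.\<close>
definition hess_lip :: "loss \<Rightarrow> real^'p1^'n \<Rightarrow> real^'p2^'n \<Rightarrow> real \<Rightarrow> real \<Rightarrow> real" where
  "hess_lip L X Z a b = (case L of Lin \<Rightarrow> 0 | Log \<Rightarrow> Cf X Z a b / 2)"

lemma obj_hess_lipschitz:
  fixes X :: "real^'p1::finite^'n::finite" and Z :: "real^'p2::finite^'n"
  assumes "a > 0" "b > 0"
  shows "norm (obj_hess L X Z a b c x d - obj_hess L X Z a b c y d) \<le> hess_lip L X Z a b * norm (x - y) * norm d"
proof (cases L)
  case Lin
  then show ?thesis using obj_hess_Lin_const[of X Z a b c x d y] by (simp add: hess_lip_def)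
next
  case Log
  then show ?thesis using obj_hess_Log_lipschitz[OF assms] by (simp add: hess_lip_def)
qed

lemma norm_obj_hess_le:
  fixes X :: "real^'p1::finite^'n::finite" and Z :: "real^'p2::finite^'n"
  assumes abc: "a > 0" "b > 0" "c > 0"
  shows "norm (obj_hess L X Z a b c x d) \<le> Lf L X Z a b c * norm d"
proof (rule norm_le_if_quadratic_form_le)
  show "linear (obj_hess L X Z a b c x)"
    using obj_grad_has_derivative[of L X Z y a b c x] by (simp add: has_derivative_def bounded_linear.linear)
  show "d \<bullet> obj_hess L X Z a b c x e = e \<bullet> obj_hess L X Z a b c x d" for d e
    by (rule obj_hess_symmetric)
  show "0 \<le> d \<bullet> obj_hess L X Z a b c x d" for d
    by (rule obj_hess_quadratic_bounds(3)[OF abc])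
  show "d \<bullet> obj_hess L X Z a b c x d \<le> Lf L X Z a b c * (norm d)\<^sup>2" for d
    using obj_hess_quadratic_bounds(2)[OF abc, of d L X Z x] quadratic_form_le_Lf[of d L X Z a b c]
    by linarith
qed

lemma sparse_smooth_objective_obj:
  fixes X :: "real^'p1::finite^'n::finite" and Z :: "real^'p2::finite^'n"
  assumes abc: "a > 0" "b > 0" "c > 0" and lf_pos: "lf L X Z a b c (s1 + s2) > 0"
  shows "sparse_smooth_objective (obj L X Z y a b c) (obj_grad L X Z y a b c) (obj_hess L X Z a b c)
           s1 s2 (lf L X Z a b c (s1 + s2)) (Lf L X Z a b c) (hess_lip L X Z a b)"
proof
  show "lf L X Z a b c (s1 + s2) * (norm d)\<^sup>2 \<le> d \<bullet> obj_hess L X Z a b c x d"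
    if "card (supp d) \<le> s1 + s2" for x d
    using lf_le_quadratic_form[OF that, of L X Z a b c] obj_hess_quadratic_bounds(1)[OF abc, of d L X Z x] by linarith
qed (simp_all add: obj_has_derivative obj_grad_has_derivative obj_hess_symmetric norm_obj_hess_le[OF abc]
      obj_hess_lipschitz[OF abc(1,2)] lf_pos)

theorem theorem4p5:
  fixes L :: loss
    and X :: "real^'p1::finite^'n::finite" and Z :: "real^'p2::finite^'n"
    and y :: "real^'n"
    and a b c \<sigma> \<epsilon> \<alpha>0 \<gamma> :: real
    and s1 s2 :: nat
    and \<beta> :: "nat \<Rightarrow> real^('p1 + 'p2)"
    and \<beta>star :: "real^('p1 + 'p2)"
  assumes abc: "a > 0" "b > 0" "c > 0"
    and y01: "L = Log \<Longrightarrow> \<forall>i. y $ i \<in> {0, 1}"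
    and s1: "1 \<le> s1" "s1 \<le> CARD('p1)"
    and s2: "1 \<le> s2" "s2 \<le> CARD('p2)"
    and reg: "s_regular (hcat X Z) (s1 + s2)"
    and sig: "0 < \<sigma>" "\<sigma> < lf L X Z a b c (s1 + s2) / 2"
    and params: "\<epsilon> > 0" "0 < \<alpha>0" "\<alpha>0 \<le> 1" "0 < \<gamma>" "\<gamma> < 1"
    and start: "\<beta> 0 \<in> Sigma_set s1 s2"
    and iter: "\<And>k. gpna_step (obj L X Z y a b c) s1 s2 \<sigma> \<epsilon> \<alpha>0 \<gamma> (\<beta> k) (\<beta> (Suc k))"
    and lim: "\<beta> \<longlonglongrightarrow> \<beta>star"
  shows "(L = Log \<longrightarrow>
            (\<forall>\<^sub>F k in sequentially.
               norm (\<beta> (Suc k) - \<beta>star)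
                 \<le> (1 + Lf L X Z a b c)^2 * Cf X Z a b / (2 * lf L X Z a b c (s1 + s2))
                     * (norm (\<beta> k - \<beta>star))^2))
       \<and> (L = Lin \<longrightarrow> (\<forall>\<^sub>F k in sequentially. \<beta> (Suc k) = \<beta>star))"
proof -
  interpret sparse_smooth_objective "obj L X Z y a b c" "obj_grad L X Z y a b c" "obj_hess L X Z a b c"
      s1 s2 "lf L X Z a b c (s1 + s2)" "Lf L X Z a b c" "hess_lip L X Z a b"
    using sig by (intro sparse_smooth_objective_obj[OF abc]) simp
  have "\<forall>\<^sub>F k in sequentially. norm (\<beta> (Suc k) - \<beta>star)
          \<le> (1 + Lf L X Z a b c)\<^sup>2 * hess_lip L X Z a b / lf L X Z a b c (s1 + s2) * (norm (\<beta> k - \<beta>star))\<^sup>2"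
    using sig by (intro gpna_local_quadratic_convergence[OF _ _ params start iter lim]) simp_all
  then show ?thesis
    by (cases L) (simp_all add: hess_lip_def)
qed

end
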